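(* Let $\Pi$ be the problem of properly $3$-coloring the nodes of rooted binary trees (without inputs). Then there exists an LCL problem $\Pi'$ on rooted binary trees with the same asymptotic round complexity as $\Pi$ in the LOCAL model, such that every solution of $\Pi'$ is also a solution of $\Pi$, and $\Pi'$ is $O(1)$-mendable.
   Context: In a rooted tree each node knows which neighbor is its parent; in a rooted binary tree each node has at most two children. A proper $3$-coloring assigns to each node a color in $\{1,2,3\}$ with adjacent nodes receiving different colors. A locally verifiable problem on a graph family is given by a set $\Gamma$ of output labels (here no inputs) and a verifier $\psi$ with verification radius $r$: $\psi(G,\lambda,v)\in\{\text{happy},\text{unhappy}\}$ depends only on the radius-$r$ neighborhood of $v$ (structure and outputs, up to isomorphism), and $\lambda$ is a solution if $\psi$ is happy everywhere; it is an LCL problem if $\Gamma$ is finite and degrees are bounded. Partial labelings are maps $\lambda:V\to\Gamma\cup\{\bot\}$; the relaxed verifier $\psi^*$ is happy at $v$ if some node within distance $r$ of $v$ has label $\bot$, and otherwise $\psi^*(G,\lambda,v)=\psi(G,\lambda',v)$ for any completion $\lambda'$ agreeing with $\lambda$ on the radius-$r$ neighborhood of $v$; $\psi^*$ accepts $\lambda$ if happy everywhere. Given $\lambda$ accepted by $\psi^*$ and node $v$, a $t$-mend of $\lambda$ at $v$ is a partial labeling $\mu$ accepted by $\psi^*$ with $\mu(v)\neq\bot$, $\mu(u)=\bot\Rightarrow\lambda(u)=\bot$, and $\mu(u)\neq\lambda(u)\Rightarrow \mathrm{dist}(u,v)\le t$. $\Pi'$ is $O(1)$-mendable if for some $r$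 there is a radius-$r$ verifier for $\Pi'$ (accepting exactly its solutions) and a constant $t$ such that on every graph of the family, for every partial labeling accepted by $\psi^*$ and every node $v$, a $t$-mend at $v$ exists. LOCAL model: nodes with unique identifiers communicate along edges in synchronous rounds with unbounded messages; round complexity is the number of rounds needed to output a valid solution. *)

theory Defs
  imports Main "HOL-Library.Landau_Symbols"
begin

text \<open>A (finite) rooted binary tree is given by a finite vertex set V of naturals and a
parent map par (None = no parent). Vertex names double as unique identifiers in the
LOCAL model.\<close>

definition pstep :: "(nat \<Rightarrow> nat option) \<Rightarrow> nat \<Rightarrow> nat" where
  "pstep par v = (case par v of Some p \<Rightarrow> p | None \<Rightarrow> v)"

definition rooted_binary_tree :: "nat set \<Rightarrow> (nat \<Rightarrow> nat option) \<Rightarrow> bool" where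
  "rooted_binary_tree V par \<longleftrightarrow>
     finite V \<and> V \<noteq> {} \<and>
     (\<forall>v. v \<notin> V \<longrightarrow> par v = None) \<and>
     (\<forall>v\<in>V. \<forall>p. par v = Some p \<longrightarrow> p \<in> V) \<and>
     (\<exists>!\<rho>. \<rho> \<in> V \<and> par \<rho> = None) \<and>
     (\<forall>v\<in>V. \<exists>k \<rho>. \<rho> \<in> V \<and> par \<rho> = None \<and> (pstep par ^^ k) v = \<rho>) \<and>
     (\<forall>v\<in>V. card {u\<in>V. par u = Some v} \<le> 2)"

definition adj :: "(nat \<Rightarrow> nat option) \<Rightarrow> nat \<Rightarrow> nat \<Rightarrow> bool" where
  "adj par u v \<longleftrightarrow> par u = Some v \<or> par v = Some u"

inductive walk_le :: "(nat \<Rightarrow> nat option) \<Rightarrow> nat \<Rightarrow> nat \<Rightarrow> nat \<Rightarrow> bool"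
  for par where
  refl: "walk_le par k u u"
| step: "walk_le par k u v \<Longrightarrow> adj par v w \<Longrightarrow> walk_le par (Suc k) u w"

definition ball :: "(nat \<Rightarrow> nat option) \<Rightarrow> nat \<Rightarrow> nat \<Rightarrow> nat set" where
  "ball par v k = {u. walk_le par k v u}"

type_synonym problem = "nat set \<Rightarrow> (nat \<Rightarrow> nat option) \<Rightarrow> (nat \<Rightarrow> nat) \<Rightarrow> bool"
type_synonym verifier = "nat set \<Rightarrow> (nat \<Rightarrow> nat option) \<Rightarrow> (nat \<Rightarrow> nat) \<Rightarrow> nat \<Rightarrow> bool"

definition three_col :: problem where
  "three_col V par lab \<longleftrightarrow>
     (\<forall>v\<in>V. lab v \<in> {1,2,3}) \<and> (\<forall>v\<in>V. \<forall>u. par v = Some u \<longrightarrow> lab u \<noteq> lab v)"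

definition ball_iso ::
  "nat \<Rightarrow> (nat \<Rightarrow> nat option) \<Rightarrow> (nat \<Rightarrow> 'b) \<Rightarrow> nat \<Rightarrow> (nat \<Rightarrow> nat option) \<Rightarrow> (nat \<Rightarrow> 'b) \<Rightarrow> nat \<Rightarrow> bool"
  where
  "ball_iso r par lab v par' lab' v' \<longleftrightarrow>
     (\<exists>f. bij_betw f (ball par v r) (ball par' v' r) \<and> f v = v' \<and>
          (\<forall>u\<in>ball par v r. \<forall>w\<in>ball par v r. (par u = Some w) = (par' (f u) = Some (f w))) \<and>
          (\<forall>u\<in>ball par v r. lab u = lab' (f u)))"

definition is_verifier :: "nat \<Rightarrow> verifier \<Rightarrow> bool" where
  "is_verifier r \<psi> \<longleftrightarrow>
     (\<forall>V par lab v V' par' lab' v'.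
        rooted_binary_tree V par \<longrightarrow> rooted_binary_tree V' par' \<longrightarrow> v \<in> V \<longrightarrow> v' \<in> V' \<longrightarrow>
        ball_iso r par lab v par' lab' v' \<longrightarrow> \<psi> V par lab v = \<psi> V' par' lab' v')"

definition verifies :: "nat set \<Rightarrow> problem \<Rightarrow> verifier \<Rightarrow> bool" where
  "verifies \<Gamma> \<Pi> \<psi> \<longleftrightarrow>
     (\<forall>V par lab. rooted_binary_tree V par \<longrightarrow>
        (\<Pi> V par lab \<longleftrightarrow> (\<forall>v\<in>V. lab v \<in> \<Gamma>) \<and> (\<forall>v\<in>V. \<psi> V par lab v)))"

definition is_LCL :: "nat set \<Rightarrow> problem \<Rightarrow> bool" where
  "is_LCL \<Gamma> \<Pi> \<longleftrightarrow> finite \<Gamma> \<and> (\<exists>r \<psi>. is_verifier r \<psi> \<and> verifies \<Gamma> \<Pi> \<psi>)"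

definition relaxed_happy ::
  "nat set \<Rightarrow> nat \<Rightarrow> verifier \<Rightarrow> nat set \<Rightarrow> (nat \<Rightarrow> nat option) \<Rightarrow> (nat \<Rightarrow> nat option) \<Rightarrow> nat \<Rightarrow> bool"
  where
  "relaxed_happy \<Gamma> r \<psi> V par \<mu> v \<longleftrightarrow>
     (\<exists>u\<in>ball par v r. \<mu> u = None) \<or>
     (\<forall>lab'. (\<forall>u\<in>V. lab' u \<in> \<Gamma>) \<longrightarrow> (\<forall>u\<in>ball par v r. \<mu> u = Some (lab' u)) \<longrightarrow> \<psi> V par lab' v)"

definition relaxed_accepts ::
  "nat set \<Rightarrow> nat \<Rightarrow> verifier \<Rightarrow> nat set \<Rightarrow> (nat \<Rightarrow> nat option) \<Rightarrow> (nat \<Rightarrow> nat option) \<Rightarrow> bool"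
  where
  "relaxed_accepts \<Gamma> r \<psi> V par \<mu> \<longleftrightarrow> (\<forall>v\<in>V. relaxed_happy \<Gamma> r \<psi> V par \<mu> v)"

definition partial_labeling :: "nat set \<Rightarrow> nat set \<Rightarrow> (nat \<Rightarrow> nat option) \<Rightarrow> bool" where
  "partial_labeling \<Gamma> V \<mu> \<longleftrightarrow> (\<forall>u\<in>V. \<mu> u = None \<or> (\<exists>g\<in>\<Gamma>. \<mu> u = Some g))"

definition is_mend ::
  "nat set \<Rightarrow> nat \<Rightarrow> verifier \<Rightarrow> nat \<Rightarrow> nat set \<Rightarrow> (nat \<Rightarrow> nat option)
     \<Rightarrow> (nat \<Rightarrow> nat option) \<Rightarrow> nat \<Rightarrow> (nat \<Rightarrow> nat option) \<Rightarrow> bool"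
  where
  "is_mend \<Gamma> r \<psi> t V par \<mu> v \<mu>' \<longleftrightarrow>
     partial_labeling \<Gamma> V \<mu>' \<and> relaxed_accepts \<Gamma> r \<psi> V par \<mu>' \<and> \<mu>' v \<noteq> None \<and>
     (\<forall>u\<in>V. \<mu>' u = None \<longrightarrow> \<mu> u = None) \<and>
     (\<forall>u\<in>V. \<mu>' u \<noteq> \<mu> u \<longrightarrow> u \<in> ball par v t)"

definition O1_mendable :: "nat set \<Rightarrow> problem \<Rightarrow> bool" where
  "O1_mendable \<Gamma> \<Pi> \<longleftrightarrow>
     (\<exists>r \<psi> t. is_verifier r \<psi> \<and> verifies \<Gamma> \<Pi> \<psi> \<and>
        (\<forall>V par \<mu> v. rooted_binary_tree V par \<longrightarrow> partial_labeling \<Gamma> V \<mu> \<longrightarrow>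
            relaxed_accepts \<Gamma> r \<psi> V par \<mu> \<longrightarrow> v \<in> V \<longrightarrow>
            (\<exists>\<mu>'. is_mend \<Gamma> r \<psi> t V par \<mu> v \<mu>')))"

definition local_instance :: "nat \<Rightarrow> nat \<Rightarrow> nat set \<Rightarrow> (nat \<Rightarrow> nat option) \<Rightarrow> bool" where
  "local_instance c n V par \<longleftrightarrow> rooted_binary_tree V par \<and> card V = n \<and> V \<subseteq> {1..n ^ c}"

text \<open>What a node v knows after T rounds: the nodes (with identifiers) within distance T
and the parent relation among them.\<close>
definition view :: "(nat \<Rightarrow> nat option) \<Rightarrow> nat \<Rightarrow> nat \<Rightarrow> nat set \<times> (nat \<Rightarrow> nat option)" where
  "view par T v =
     (ball par v T,
      (\<lambda>u. if u \<in> ball par v T then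
              (case par u of Some p \<Rightarrow> if p \<in> ball par v T then Some p else None | None \<Rightarrow> None)
            else None))"

definition solvable_in :: "problem \<Rightarrow> nat \<Rightarrow> nat \<Rightarrow> nat \<Rightarrow> bool" where
  "solvable_in \<Pi> c n T \<longleftrightarrow>
     (\<exists>L :: nat set \<Rightarrow> (nat \<Rightarrow> nat option) \<Rightarrow> nat \<Rightarrow> nat.
        (\<forall>V par V' par' v. local_instance c n V par \<longrightarrow> local_instance c n V' par' \<longrightarrow> v \<in> V \<longrightarrow> v \<in> V' \<longrightarrow>
            view par T v = view par' T v \<longrightarrow> L V par v = L V' par' v) \<and>
        (\<forall>V par. local_instance c n V par \<longrightarrow> \<Pi> V par (L V par)))"

definition round_complexity :: "problem \<Rightarrow> nat \<Rightarrow> nat \<Rightarrow> nat" where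
  "round_complexity \<Pi> c n = (LEAST T. solvable_in \<Pi> c n T)"

definition same_asymptotic_complexity :: "problem \<Rightarrow> problem \<Rightarrow> nat \<Rightarrow> bool" where
  "same_asymptotic_complexity \<Pi>1 \<Pi>2 c \<longleftrightarrow>
     (\<forall>n. \<exists>T. solvable_in \<Pi>1 c n T) \<and> (\<forall>n. \<exists>T. solvable_in \<Pi>2 c n T) \<and>
     (\<lambda>n. real (round_complexity \<Pi>1 c n)) \<in> \<Theta>(\<lambda>n. real (round_complexity \<Pi>2 c n))"

end

(*
  The problem is 3-colouring with one more local rule: a node whose children do not all have
  the same colour must have colour 3. Its solutions are 3-colourings. Conversely, if every node
  of a 3-coloured tree adopts its parent's colour, siblings agree and the result is a solution,
  so one extra round suffices; as 3-colouring needs at least one round, the two complexities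
  are within a factor 2.

  Mending rests on the set of colours that a node y can receive when only the d generations
  below it are relabelled and kept happy. Call a set of colours flexible if it has two
  elements; two flexible sets meet, so the at most two children of a node can agree on a
  colour from their flexible sets. Hence the set for y is flexible for d = 1 if that region is
  happy, and for d >= 2 it contains 3 and another colour: y avoids the common colour of its
  children, or takes 3 above children that avoid 3. A blank node v is filled by relabelling the
  subtree of depth 4 below its parent p, where p keeps its colour and its children avoid it; if
  p is blank or missing, the subtree of depth 3 below v suffices. The rule at a node only
  involves its own and its children's colours, so outside the region only the parent of its
  top could notice the change, and it sees an unchanged colour or is blank itself.
*)

theory Submission
  imports Defs
begin

section \<open>Walks, depth and subtrees in rooted trees\<close>

lemma rooted_binary_tree_parent_in:
  assumes "rooted_binary_tree V par" "par v = Some p"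
  shows "v \<in> V" "p \<in> V"
proof -
  show "v \<in> V" using assms unfolding rooted_binary_tree_def by force
  then show "p \<in> V" using assms unfolding rooted_binary_tree_def by blast
qed

lemma rooted_binary_tree_children_le_2:
  assumes "rooted_binary_tree V par" "y \<in> V"
  shows "card {u. par u = Some y} \<le> 2"
proof -
  have "{u. par u = Some y} = {u\<in>V. par u = Some y}"
    using rooted_binary_tree_parent_in[OF assms(1)] by auto
  then show ?thesis using assms unfolding rooted_binary_tree_def by auto
qed

lemma children_cases:
  assumes T: "rooted_binary_tree V par" and y: "y \<in> V"
  obtains "\<forall>u. par u \<noteq> Some y"
  | c where "\<forall>u. par u = Some y \<longleftrightarrow> u = c"
  | c1 c2 where "c1 \<noteq> c2" "\<forall>u. par u = Some y \<longleftrightarrow> u = c1 \<or> u = c2"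
proof -
  let ?S = "{u. par u = Some y}"
  have "?S \<subseteq> V" using rooted_binary_tree_parent_in(1)[OF T] by blast
  then have "finite ?S" using T unfolding rooted_binary_tree_def by (blast intro: finite_subset)
  moreover have "card ?S \<le> 2" by (rule rooted_binary_tree_children_le_2[OF T y])
  ultimately consider "?S = {}" | c where "?S = {c}" | c1 c2 where "c1 \<noteq> c2" "?S = {c1, c2}"
    using card_2_iff[of ?S]
    by (cases "card ?S") (auto simp: card_1_singleton_iff le_Suc_eq numeral_2_eq_2)
  then show ?thesis using that unfolding set_eq_iff by (cases; simp) blast+
qed

lemma walk_le_0: "walk_le par 0 u w \<Longrightarrow> w = u"
  by (cases rule: walk_le.cases) auto

lemma walk_le_Suc_0_iff: "walk_le par (Suc 0) w u \<longleftrightarrow> u = w \<or> adj par w u"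
proof
  assume "walk_le par (Suc 0) w u"
  then show "u = w \<or> adj par w u"
    by (cases rule: walk_le.cases) (auto dest: walk_le_0)
qed (metis walk_le.refl walk_le.step)

lemma walk_le_child: "par u = Some w \<Longrightarrow> walk_le par (Suc 0) w u"
  unfolding walk_le_Suc_0_iff adj_def by simp

lemma walk_le_add: "walk_le par k a b \<Longrightarrow> walk_le par (k + j) a b"
  by (induction k a b rule: walk_le.induct) (auto intro: walk_le.intros)

lemma walk_le_mono: "walk_le par k a b \<Longrightarrow> k \<le> l \<Longrightarrow> walk_le par l a b"
  using walk_le_add le_Suc_ex by metis

lemma walk_le_trans:
  assumes "walk_le par k a b" "walk_le par j b c"
  shows "walk_le par (k + j) a c"
  using assms(2,1)
proof (induction j b c rule: walk_le.induct)
  case (refl j u)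
  then show ?case by (rule walk_le_add)
next
  case (step j u v w)
  then show ?case by (metis add_Suc_right walk_le.step)
qed

lemma walk_le_sym: "walk_le par k a b \<Longrightarrow> walk_le par k b a"
proof (induction k a b rule: walk_le.induct)
  case (refl k u)
  then show ?case by (rule walk_le.refl)
next
  case (step k u v w)
  have "walk_le par (Suc 0) w v"
    using step.hyps(2) unfolding walk_le_Suc_0_iff adj_def by auto
  from walk_le_trans[OF this step.IH] show ?case by simp
qed

lemma walk_le_in_V:
  assumes "rooted_binary_tree V par"
  shows "walk_le par k v u \<Longrightarrow> v \<in> V \<Longrightarrow> u \<in> V"
  by (induction k v u rule: walk_le.induct)
    (use rooted_binary_tree_parent_in[OF assms] in \<open>auto simp: adj_def\<close>)

lemma center_in_ball: "v \<in> ball par v k"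
  unfolding ball_def by (simp add: walk_le.refl)

lemma ball_1: "ball par w 1 = {u. u = w \<or> par w = Some u \<or> par u = Some w}"
  unfolding ball_def One_nat_def walk_le_Suc_0_iff adj_def by auto

lemma ball_mono: "j \<le> k \<Longrightarrow> ball par v j \<subseteq> ball par v k"
  unfolding ball_def using walk_le_mono by blast

lemma ball_trans: "w \<in> ball par v j \<Longrightarrow> u \<in> ball par w k \<Longrightarrow> u \<in> ball par v (j + k)"
  unfolding ball_def using walk_le_trans by blast

definition depth :: "(nat \<Rightarrow> nat option) \<Rightarrow> nat \<Rightarrow> nat" where
  "depth par v = (LEAST k. par ((pstep par ^^ k) v) = None)"

lemma pstep_Some: "par v = Some p \<Longrightarrow> pstep par v = p"
  unfolding pstep_def by simp

lemma pstep_None: "par v = None \<Longrightarrow> pstep par v = v"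
  unfolding pstep_def by simp

lemma rooted_binary_tree_reaches_root:
  assumes "rooted_binary_tree V par" "v \<in> V"
  shows "\<exists>k. par ((pstep par ^^ k) v) = None"
  using assms unfolding rooted_binary_tree_def by blast

lemma depth_parent:
  assumes "rooted_binary_tree V par" "par v = Some p"
  shows "depth par v = Suc (depth par p)"
proof -
  obtain k where k: "par ((pstep par ^^ k) p) = None"
    using rooted_binary_tree_reaches_root[OF assms(1) rooted_binary_tree_parent_in(2)[OF assms]]
    by blast
  have shift: "(pstep par ^^ Suc m) v = (pstep par ^^ m) p" for m
    unfolding funpow_Suc_right comp_def using pstep_Some[of par v p, OF assms(2)] by simp
  have "par ((pstep par ^^ Suc k) v) = None" using k shift by simp
  moreover have "\<not> par ((pstep par ^^ 0) v) = None" using assms(2) by simp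
  ultimately have "(LEAST n. par ((pstep par ^^ n) v) = None)
      = Suc (LEAST m. par ((pstep par ^^ Suc m) v) = None)"
    by (rule Least_Suc)
  then show ?thesis unfolding depth_def shift by simp
qed

lemma parent_neq:
  assumes "rooted_binary_tree V par" "par u = Some y"
  shows "u \<noteq> y"
  using depth_parent[OF assms] by auto

lemma depth_root: "par u = None \<Longrightarrow> depth par u = 0"
  unfolding depth_def by (rule Least_eq_0) simp

lemma depth_reaches_root:
  assumes "rooted_binary_tree V par" "v \<in> V"
  shows "par ((pstep par ^^ depth par v) v) = None"
  unfolding depth_def using rooted_binary_tree_reaches_root[OF assms] by (rule LeastI_ex)

lemma depth_ancestor:
  assumes T: "rooted_binary_tree V par" and v: "v \<in> V" and i: "i \<le> depth par v"
  shows "(pstep par ^^ i) v \<in> V \<and> depth par ((pstep par ^^ i) v) = depth par v - i"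
  using i
proof (induction i)
  case 0
  then show ?case using v by simp
next
  case (Suc i)
  let ?x = "(pstep par ^^ i) v"
  have IH: "?x \<in> V" "depth par ?x = depth par v - i" using Suc by auto
  then obtain p where p: "par ?x = Some p"
    using Suc.prems depth_root[of par ?x] by (cases "par ?x") auto
  have "(pstep par ^^ Suc i) v = p" using p by (simp add: pstep_Some)
  moreover have "p \<in> V" using rooted_binary_tree_parent_in[OF T p] by simp
  moreover have "depth par p = depth par v - Suc i" using depth_parent[OF T p] IH(2) by simp
  ultimately show ?case by simp
qed

lemma depth_less_card:
  assumes T: "rooted_binary_tree V par" and v: "v \<in> V"
  shows "depth par v < card V"
proof -
  let ?f = "\<lambda>i. (pstep par ^^ i) v"
  have "inj_on ?f {0..depth par v}"
  proof (rule inj_onI)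
    fix i j assume "i \<in> {0..depth par v}" "j \<in> {0..depth par v}" "?f i = ?f j"
    then show "i = j" using depth_ancestor[OF T v, of i] depth_ancestor[OF T v, of j] by auto
  qed
  then have "card (?f ` {0..depth par v}) = Suc (depth par v)"
    by (simp add: card_image)
  moreover have "?f ` {0..depth par v} \<subseteq> V" using depth_ancestor[OF T v] by auto
  then have "card (?f ` {0..depth par v}) \<le> card V"
    using T unfolding rooted_binary_tree_def by (blast intro: card_mono)
  ultimately show ?thesis by simp
qed

lemma walk_le_pstep: "walk_le par k v ((pstep par ^^ k) v)"
proof (induction k)
  case 0
  then show ?case by (simp add: walk_le.refl)
next
  case (Suc k)
  show ?case
  proof (cases "par ((pstep par ^^ k) v)")
    case None
    then show ?thesis using walk_le_add[OF Suc.IH, of 1] by (simp add: pstep_None)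
  next
    case (Some p)
    then show ?thesis using walk_le.step[OF Suc.IH] by (simp add: pstep_Some adj_def)
  qed
qed

lemma walk_le_double_card:
  assumes T: "rooted_binary_tree V par" and v: "v \<in> V" and u: "u \<in> V" and n: "card V \<le> n"
  shows "walk_le par (2 * n) v u"
proof -
  let ?a = "(pstep par ^^ depth par v) v" and ?b = "(pstep par ^^ depth par u) u"
  have "?a = ?b"
    using T depth_ancestor[OF T v order.refl] depth_reaches_root[OF T v]
      depth_ancestor[OF T u order.refl] depth_reaches_root[OF T u]
    unfolding rooted_binary_tree_def by blast
  then have "walk_le par (depth par v) v ?b"
    using walk_le_pstep[of par "depth par v" v] by simp
  then have "walk_le par (depth par v + depth par u) v u"
    using walk_le_trans walk_le_sym[OF walk_le_pstep[of par "depth par u" u]] by blast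
  moreover have "depth par v + depth par u \<le> 2 * n"
    using depth_less_card[OF T v] depth_less_card[OF T u] n by simp
  ultimately show ?thesis by (rule walk_le_mono)
qed

lemma ball_double_card:
  assumes T: "rooted_binary_tree V par" and v: "v \<in> V" and n: "card V \<le> n"
  shows "ball par v (2 * n) = V"
  unfolding ball_def using walk_le_double_card[OF T v _ n] walk_le_in_V[OF T _ v] by blast

fun subtree :: "(nat \<Rightarrow> nat option) \<Rightarrow> nat \<Rightarrow> nat \<Rightarrow> nat set" where
  "subtree par y 0 = {y}"
| "subtree par y (Suc d) = insert y (\<Union>c\<in>{c. par c = Some y}. subtree par c d)"

lemma subtree_self: "y \<in> subtree par y d"
  by (cases d) auto

lemma subtree_ancestor:
  assumes "rooted_binary_tree V par" "u \<in> subtree par y d"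
  shows "\<exists>k\<le>d. (pstep par ^^ k) u = y \<and> depth par u = depth par y + k"
  using assms(2)
proof (induction d arbitrary: y)
  case (Suc d)
  show ?case
  proof (cases "u = y")
    case False
    then obtain c where c: "par c = Some y" "u \<in> subtree par c d" using Suc.prems by auto
    obtain k where k: "k \<le> d" "(pstep par ^^ k) u = c" "depth par u = depth par c + k"
      using Suc.IH[OF c(2)] by blast
    then show ?thesis
      using c(1) depth_parent[OF assms(1) c(1)]
      by (intro exI[of _ "Suc k"]) (simp add: pstep_Some)
  qed (intro exI[of _ 0], simp)
qed simp

lemma subtree_depth:
  assumes "rooted_binary_tree V par" "u \<in> subtree par y d"
  shows "depth par y \<le> depth par u"
  using subtree_ancestor[OF assms] by auto

lemma subtree_depth_less:
  assumes "rooted_binary_tree V par" "u \<in> subtree par y d" "u \<noteq> y"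
  shows "depth par y < depth par u"
proof -
  obtain k where "(pstep par ^^ k) u = y" "depth par u = depth par y + k"
    using subtree_ancestor[OF assms(1,2)] by blast
  then show ?thesis using assms(3) by (cases k) auto
qed

lemma subtree_walk: "u \<in> subtree par y d \<Longrightarrow> walk_le par d y u"
proof (induction d arbitrary: y)
  case (Suc d)
  show ?case
  proof (cases "u = y")
    case False
    then obtain c where c: "par c = Some y" "u \<in> subtree par c d" using Suc.prems by auto
    from walk_le_trans[OF walk_le_child[of par c y, OF c(1)] Suc.IH[OF c(2)]] show ?thesis by simp
  qed (simp add: walk_le.refl)
qed (simp add: walk_le.refl)

lemma subtree_subset_ball: "subtree par y d \<subseteq> ball par y d"
  unfolding ball_def using subtree_walk by blast

lemma subtree_parent:
  "u \<in> subtree par y d \<Longrightarrow> u \<noteq> y \<Longrightarrow> par u = Some w \<Longrightarrow> w \<in> subtree par y d"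
proof (induction d arbitrary: y)
  case (Suc d)
  then obtain c where c: "par c = Some y" "u \<in> subtree par c d" by auto
  then show ?case using Suc by (cases "u = c") auto
qed simp

lemma subtree_child: "w \<in> subtree par y d \<Longrightarrow> par u = Some w \<Longrightarrow> u \<in> subtree par y (Suc d)"
proof (induction d arbitrary: y)
  case (Suc d)
  show ?case
  proof (cases "w = y")
    case False
    then obtain c where "par c = Some y" "w \<in> subtree par c d" using Suc.prems by auto
    then show ?thesis using Suc.IH[of c] Suc.prems(2) by auto
  qed (use Suc.prems in \<open>auto intro: subtree_self\<close>)
qed (auto intro: subtree_self)

lemma subtree_subset_Suc: "subtree par y d \<subseteq> subtree par y (Suc d)"
proof (induction d arbitrary: y)
  case (Suc d)
  then show ?case by auto
qed (simp add: subtree_self)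

lemma subtree_child_subset: "par c = Some y \<Longrightarrow> subtree par c d \<subseteq> subtree par y (Suc d)"
  by auto

lemma subtree_subset:
  assumes "rooted_binary_tree V par" "y \<in> V"
  shows "subtree par y d \<subseteq> V"
  using assms(2)
proof (induction d arbitrary: y)
  case (Suc d)
  have "subtree par c d \<subseteq> V" if "par c = Some y" for c
    using Suc.IH rooted_binary_tree_parent_in(1)[OF assms(1) that] .
  then show ?case using Suc.prems by auto
qed simp

lemma subtree_disjoint:
  assumes T: "rooted_binary_tree V par" and "par c1 = Some y" "par c2 = Some y"
    and "u \<in> subtree par c1 d" "u \<in> subtree par c2 d'"
  shows "c1 = c2"
proof -
  obtain k1 where k1: "(pstep par ^^ k1) u = c1" "depth par u = depth par c1 + k1"
    using subtree_ancestor[OF T assms(4)] by blast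
  obtain k2 where k2: "(pstep par ^^ k2) u = c2" "depth par u = depth par c2 + k2"
    using subtree_ancestor[OF T assms(5)] by blast
  have "depth par c1 = depth par c2"
    using depth_parent[OF T assms(2)] depth_parent[OF T assms(3)] by simp
  then show ?thesis using k1 k2 by simp
qed

lemma subtree_sibling_far:
  assumes T: "rooted_binary_tree V par" and c: "par c = Some p" and v: "par v = Some p"
    and "c \<noteq> v" and w: "w \<in> subtree par c d"
  shows "w \<noteq> v \<and> par w \<noteq> Some v \<and> par v \<noteq> Some w"
proof (intro conjI notI)
  assume "w = v"
  then show False using subtree_disjoint[OF T c v w, of 0] subtree_self \<open>c \<noteq> v\<close> by metis
next
  assume "par w = Some v"
  then have "w \<in> subtree par v 1" using subtree_child[OF subtree_self] by (simp add: One_nat_def)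
  then show False using subtree_disjoint[OF T c v w] \<open>c \<noteq> v\<close> by blast
next
  assume "par v = Some w"
  then have "w = p" using v by simp
  then show False
    using subtree_depth[OF T w] depth_parent[OF T c] by simp
qed

section \<open>The problem\<close>

definition colours :: "nat set" where
  "colours = {1, 2, 3}"

text \<open>Labels are partial (\<open>None\<close> is a blank), so that \<open>strict_ok\<close> describes both the
  verifier and, together with \<open>near_blank\<close>, the relaxed verifier.\<close>

definition strict_ok :: "(nat \<Rightarrow> nat option) \<Rightarrow> (nat \<Rightarrow> nat option) \<Rightarrow> nat \<Rightarrow> bool" where
  "strict_ok par \<mu> w \<longleftrightarrow> (\<forall>u. par u = Some w \<longrightarrow> \<mu> u \<noteq> \<mu> w) \<and>
     ((\<exists>u u'. par u = Some w \<and> par u' = Some w \<and> \<mu> u \<noteq> \<mu> u') \<longrightarrow> \<mu> w = Some 3)"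

definition near_blank :: "(nat \<Rightarrow> nat option) \<Rightarrow> (nat \<Rightarrow> nat option) \<Rightarrow> nat \<Rightarrow> bool" where
  "near_blank par \<mu> w \<longleftrightarrow>
     \<mu> w = None \<or> (\<exists>p. par w = Some p \<and> \<mu> p = None) \<or> (\<exists>u. par u = Some w \<and> \<mu> u = None)"

definition relaxed_ok :: "(nat \<Rightarrow> nat option) \<Rightarrow> (nat \<Rightarrow> nat option) \<Rightarrow> nat \<Rightarrow> bool" where
  "relaxed_ok par \<mu> w \<longleftrightarrow> near_blank par \<mu> w \<or> strict_ok par \<mu> w"

definition strict_verifier :: verifier where
  "strict_verifier V par lab w = strict_ok par (\<lambda>u. Some (lab u)) w"

definition three_col_strict :: problem where
  "three_col_strict V par lab \<longleftrightarrow>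
     (\<forall>v\<in>V. lab v \<in> colours) \<and> (\<forall>v\<in>V. strict_verifier V par lab v)"

lemma strict_ok_cong:
  assumes "\<mu> w = \<mu>' w" "\<And>u. par u = Some w \<Longrightarrow> \<mu> u = \<mu>' u"
  shows "strict_ok par \<mu> w = strict_ok par \<mu>' w"
  unfolding strict_ok_def using assms by metis

lemma strict_ok_choice:
  assumes T: "rooted_binary_tree V par"
    and "\<And>u. par u = Some y \<Longrightarrow> ch u \<noteq> z"
    and "\<And>u u'. par u = Some y \<Longrightarrow> par u' = Some y \<Longrightarrow> ch u \<noteq> ch u' \<Longrightarrow> z = 3"
  shows "strict_ok par (\<lambda>u. Some (if u = y then z else ch u)) y"
  unfolding strict_ok_def
proof (intro conjI allI impI)
  fix u assume u: "par u = Some y"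
  then show "Some (if u = y then z else ch u) \<noteq> Some (if y = y then z else ch y)"
    using parent_neq[OF T u] assms(2)[OF u] by simp
next
  assume "\<exists>u u'. par u = Some y \<and> par u' = Some y \<and>
    Some (if u = y then z else ch u) \<noteq> Some (if u' = y then z else ch u')"
  then obtain u u' where u: "par u = Some y" "par u' = Some y"
    and "Some (if u = y then z else ch u) \<noteq> Some (if u' = y then z else ch u')"
    by blast
  then have "ch u \<noteq> ch u'" using parent_neq[OF T u(1)] parent_neq[OF T u(2)] by simp
  then show "Some (if y = y then z else ch y) = Some 3" using assms(3)[OF u] by simp
qed

lemma near_blank_cong:
  "(\<And>u. (\<mu> u = None) = (\<mu>' u = None)) \<Longrightarrow> near_blank par \<mu> w = near_blank par \<mu>' w"
  unfolding near_blank_def by simp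

lemma relaxed_ok_cong:
  assumes "\<And>u. (\<mu> u = None) = (\<mu>' u = None)"
    and "\<mu> w = \<mu>' w" "\<And>u. par u = Some w \<Longrightarrow> \<mu> u = \<mu>' u"
  shows "relaxed_ok par \<mu> w = relaxed_ok par \<mu>' w"
  using strict_ok_cong[where par=par and \<mu>=\<mu> and \<mu>'=\<mu>' and w=w, OF assms(2,3)]
    near_blank_cong[of \<mu> \<mu>' par w, OF assms(1)]
  unfolding relaxed_ok_def by simp

lemma relaxed_ok_cong_local:
  assumes "\<mu> w = \<mu>' w" "\<And>p. par w = Some p \<Longrightarrow> \<mu> p = \<mu>' p"
    and "\<And>u. par u = Some w \<Longrightarrow> \<mu> u = \<mu>' u"
  shows "relaxed_ok par \<mu> w = relaxed_ok par \<mu>' w"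
proof -
  have "near_blank par \<mu> w = near_blank par \<mu>' w"
    unfolding near_blank_def using assms by fastforce
  then show ?thesis
    unfolding relaxed_ok_def
    using strict_ok_cong[where par=par and \<mu>=\<mu> and \<mu>'=\<mu>' and w=w, OF assms(1,3)] by simp
qed

lemma relaxed_ok_update_far:
  assumes "relaxed_ok par \<mu> w" "w \<noteq> v" "par w \<noteq> Some v" "par v \<noteq> Some w"
  shows "relaxed_ok par (\<mu>(v := x)) w"
proof -
  have "relaxed_ok par (\<mu>(v := x)) w = relaxed_ok par \<mu> w"
    by (rule relaxed_ok_cong_local) (use assms(2-4) in auto)
  then show ?thesis using assms(1) by simp
qed

lemma strict_verifier_iff:
  "strict_verifier V par lab v \<longleftrightarrow>
     (\<forall>u\<in>{u. par u = Some v}. lab u \<noteq> lab v) \<and>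
     ((\<exists>u\<in>{u. par u = Some v}. \<exists>u'\<in>{u. par u = Some v}. lab u \<noteq> lab u') \<longrightarrow> lab v = 3)"
  unfolding strict_verifier_def strict_ok_def by auto

lemma ball_iso_1_children:
  assumes "ball_iso 1 par lab v par' lab' v'"
  obtains f where "f ` {u. par u = Some v} = {u. par' u = Some v'}" "lab v = lab' v'"
    "\<And>u. par u = Some v \<Longrightarrow> lab u = lab' (f u)"
proof -
  from assms obtain f where bij: "bij_betw f (ball par v 1) (ball par' v' 1)" and fv: "f v = v'"
    and edge: "\<And>u w. u \<in> ball par v 1 \<Longrightarrow> w \<in> ball par v 1 \<Longrightarrow>
      (par u = Some w) = (par' (f u) = Some (f w))"
    and lab: "\<And>u. u \<in> ball par v 1 \<Longrightarrow> lab u = lab' (f u)"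
    unfolding ball_iso_def by blast
  have C: "u \<in> ball par v 1" if "par u = Some v" for u
    using that ball_1[of par v] by simp
  have v: "v \<in> ball par v 1" by (rule center_in_ball)
  have "f ` {u. par u = Some v} = {u. par' u = Some v'}"
  proof (intro equalityI subsetI)
    fix u' assume "u' \<in> f ` {u. par u = Some v}"
    then show "u' \<in> {u. par' u = Some v'}" using edge[OF C v] fv by auto
  next
    fix u' assume u': "u' \<in> {u. par' u = Some v'}"
    then have "u' \<in> ball par' v' 1" using ball_1[of par' v'] by simp
    then obtain u where u: "u \<in> ball par v 1" "f u = u'"
      using bij unfolding bij_betw_def by (metis imageE)
    then have "par u = Some v" using edge[OF u(1) v] fv u' by simp
    then show "u' \<in> f ` {u. par u = Some v}" using u(2) by blast
  qed
  then show ?thesis using that fv lab[OF v] lab[OF C] by blast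
qed

lemma strict_verifier_is_verifier: "is_verifier 1 strict_verifier"
  unfolding is_verifier_def
proof (intro allI impI)
  fix V par v V' par' v' and lab lab' :: "nat \<Rightarrow> nat"
  assume "ball_iso 1 par lab v par' lab' v'"
  then obtain f where img: "f ` {u. par u = Some v} = {u. par' u = Some v'}"
    and "lab v = lab' v'" "\<And>u. par u = Some v \<Longrightarrow> lab u = lab' (f u)"
    by (rule ball_iso_1_children) blast
  then show "strict_verifier V par lab v = strict_verifier V' par' lab' v'"
    unfolding strict_verifier_iff img[symmetric] ball_simps bex_simps image_iff
    by simp metis
qed

lemma three_col_strict_verifies: "verifies colours three_col_strict strict_verifier"
  unfolding verifies_def three_col_strict_def by simp

lemma three_col_strict_is_LCL: "is_LCL colours three_col_strict"
  unfolding is_LCL_def colours_def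
  using strict_verifier_is_verifier three_col_strict_verifies[unfolded colours_def] by blast

lemma three_col_strict_imp_three_col:
  assumes T: "rooted_binary_tree V par" and sol: "three_col_strict V par lab"
  shows "three_col V par lab"
  unfolding three_col_def
proof (intro conjI ballI allI impI)
  fix v assume "v \<in> V"
  then show "lab v \<in> {1, 2, 3}" using sol unfolding three_col_strict_def colours_def by simp
next
  fix v u assume vu: "par v = Some u"
  have "u \<in> V" using rooted_binary_tree_parent_in(2)[OF T vu] .
  then have "strict_verifier V par lab u" using sol unfolding three_col_strict_def by blast
  then have "\<forall>w\<in>{w. par w = Some u}. lab w \<noteq> lab u"
    unfolding strict_verifier_iff by (rule conjunct1)
  then show "lab u \<noteq> lab v" using vu by (metis mem_Collect_eq)
qed

lemma relaxed_happy_iff_relaxed_ok: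
  assumes "partial_labeling colours V \<mu>"
  shows "relaxed_happy colours 1 strict_verifier V par \<mu> w \<longleftrightarrow> relaxed_ok par \<mu> w"
proof (cases "near_blank par \<mu> w")
  case True
  then show ?thesis
    unfolding relaxed_happy_def relaxed_ok_def near_blank_def ball_1 by auto
next
  case False
  then have labelled: "\<mu> u = Some (the (\<mu> u))" if "u \<in> ball par w 1" for u
    using that unfolding near_blank_def ball_1 by auto
  have agree: "strict_verifier V par lab w = strict_ok par \<mu> w"
    if "\<forall>u\<in>ball par w 1. \<mu> u = Some (lab u)" for lab
    unfolding strict_verifier_def by (rule strict_ok_cong) (use that ball_1[of par w] in auto)
  define lab where "lab u = (case \<mu> u of Some g \<Rightarrow> g | None \<Rightarrow> 1)" for u
  have "\<forall>u\<in>V. lab u \<in> colours"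
    using assms unfolding partial_labeling_def lab_def colours_def by (auto split: option.splits)
  moreover have "\<forall>u\<in>ball par w 1. \<mu> u = Some (lab u)"
    using labelled unfolding lab_def by (metis option.simps(5))
  moreover have "\<not> (\<exists>u\<in>ball par w 1. \<mu> u = None)" using labelled by fastforce
  ultimately show ?thesis
    unfolding relaxed_happy_def relaxed_ok_def using False agree by blast
qed

section \<open>Mending\<close>

definition fixes_region ::
  "(nat \<Rightarrow> nat option) \<Rightarrow> (nat \<Rightarrow> nat option) \<Rightarrow> nat set \<Rightarrow> (nat \<Rightarrow> nat option) \<Rightarrow> bool"
  where
  "fixes_region par \<mu> R \<mu>' \<longleftrightarrow>
     (\<forall>u. u \<notin> R \<longrightarrow> \<mu>' u = \<mu> u) \<and> (\<forall>u. \<mu>' u = None \<longleftrightarrow> \<mu> u = None) \<and>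
     (\<forall>u. \<mu>' u = \<mu> u \<or> \<mu>' u \<in> Some ` colours) \<and> (\<forall>w\<in>R. relaxed_ok par \<mu>' w)"

definition achievable ::
  "(nat \<Rightarrow> nat option) \<Rightarrow> (nat \<Rightarrow> nat option) \<Rightarrow> nat \<Rightarrow> nat \<Rightarrow> nat \<Rightarrow> bool"
  where
  "achievable par \<mu> y d z \<longleftrightarrow> (\<exists>\<mu>'. \<mu>' y = Some z \<and> fixes_region par \<mu> (subtree par y d) \<mu>')"

definition flexible :: "(nat \<Rightarrow> bool) \<Rightarrow> bool" where
  "flexible A \<longleftrightarrow> (\<exists>a b. a \<noteq> b \<and> a \<in> colours \<and> b \<in> colours \<and> A a \<and> A b)"

definition flexible3 :: "(nat \<Rightarrow> bool) \<Rightarrow> bool" where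
  "flexible3 A \<longleftrightarrow> A 3 \<and> (\<exists>a\<in>colours. a \<noteq> 3 \<and> A a)"

lemma flexible3_imp_flexible: "flexible3 A \<Longrightarrow> flexible A"
  unfolding flexible3_def flexible_def colours_def by blast

lemma flexible_if_avoid:
  assumes "\<And>z. z \<in> colours \<Longrightarrow> z \<noteq> m \<Longrightarrow> A z"
  shows "flexible A"
proof (cases "m = 1")
  case True
  then show ?thesis using assms unfolding flexible_def colours_def
    by (intro exI[of _ 2] exI[of _ 3]) simp
next
  case False
  then show ?thesis using assms unfolding flexible_def colours_def
    by (intro exI[of _ 1] exI[of _ "if m = 2 then 3 else 2"]) simp
qed

lemma flexible_avoid:
  assumes "flexible A"
  shows "\<exists>a\<in>colours. a \<noteq> z \<and> A a"
proof -
  obtain a b where "a \<noteq> b" "a \<in> colours" "b \<in> colours" "A a" "A b"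
    using assms unfolding flexible_def by blast
  then show ?thesis by (cases "a = z") auto
qed

lemma colours_avoid: "\<exists>a\<in>colours. a \<noteq> m \<and> a \<noteq> 3"
  unfolding colours_def by (cases "m = 1") auto

lemma flexible_meet:
  assumes "flexible A" "flexible B"
  shows "\<exists>m\<in>colours. A m \<and> B m"
proof -
  obtain a b c d where "a \<noteq> b" "c \<noteq> d" "A a" "A b" "B c" "B d"
    and "a \<in> colours" "b \<in> colours" "c \<in> colours" "d \<in> colours"
    using assms unfolding flexible_def by blast
  moreover from this have "a = c \<or> a = d \<or> b = c \<or> b = d"
    unfolding colours_def by auto
  ultimately show ?thesis by blast
qed

lemma flexible_common_choice:
  assumes T: "rooted_binary_tree V par" and y: "y \<in> V"
    and flex: "\<And>c. par c = Some y \<Longrightarrow> flexible (A c)"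
  shows "\<exists>m\<in>colours. \<forall>c. par c = Some y \<longrightarrow> A c m"
proof -
  have "1 \<in> colours" unfolding colours_def by simp
  from T y show ?thesis
  proof (cases rule: children_cases)
    case 1
    then show ?thesis using \<open>1 \<in> colours\<close> by blast
  next
    case (2 c)
    then obtain a where "a \<in> colours" "A c a" using flexible_avoid[OF flex, of c 0] by blast
    then show ?thesis using 2 by (intro bexI[of _ a]) auto
  next
    case (3 c1 c2)
    then obtain m where "m \<in> colours" "A c1 m" "A c2 m"
      using flexible_meet[OF flex flex, of c1 c2] by blast
    then show ?thesis using 3 by (intro bexI[of _ m]) auto
  qed
qed

lemma children_same_colour:
  assumes "\<not> near_blank par \<mu> y" "\<forall>u u'. par u = Some y \<longrightarrow> par u' = Some y \<longrightarrow> \<mu> u = \<mu> u'"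
  obtains e where "\<And>u. par u = Some y \<Longrightarrow> \<mu> u = Some e"
proof (cases "\<exists>u. par u = Some y")
  case True
  then obtain u0 e where "par u0 = Some y" "\<mu> u0 = Some e"
    using assms(1) unfolding near_blank_def by fastforce
  then show ?thesis using that assms(2) by metis
qed (use that in blast)

lemma achievable_labelled: "achievable par \<mu> y d z \<Longrightarrow> \<mu> y \<noteq> None"
  unfolding achievable_def fixes_region_def by force

lemma achievable_keep:
  "\<mu> y = Some z \<Longrightarrow> \<forall>w\<in>subtree par y d. relaxed_ok par \<mu> w \<Longrightarrow> achievable par \<mu> y d z"
  unfolding achievable_def fixes_region_def by blast

lemma achievable_0:
  assumes "\<mu> y \<noteq> None" "z \<in> colours" "relaxed_ok par (\<mu>(y := Some z)) y"
  shows "achievable par \<mu> y 0 z"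
  unfolding achievable_def fixes_region_def using assms by (intro exI[of _ "\<mu>(y := Some z)"]) auto

lemma glued_labelling:
  assumes T: "rooted_binary_tree V par"
    and M_out: "\<And>c u. par c = Some y \<Longrightarrow> u \<notin> subtree par c d \<Longrightarrow> M c u = \<mu> u"
  obtains \<mu>' where "\<mu>' y = Some z"
    and "\<And>c u. par c = Some y \<Longrightarrow> u \<in> subtree par c (Suc d) \<Longrightarrow> \<mu>' u = M c u"
    and "\<And>u. u \<notin> subtree par y (Suc d) \<Longrightarrow> \<mu>' u = \<mu> u"
proof -
  define owner where "owner u = (THE c. par c = Some y \<and> u \<in> subtree par c d)" for u
  define \<mu>' where "\<mu>' u = (if u = y then Some z
      else if \<exists>c. par c = Some y \<and> u \<in> subtree par c d then M (owner u) u else \<mu> u)" for u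
  have "\<mu>' u = M c u" if c: "par c = Some y" and u: "u \<in> subtree par c (Suc d)" for c u
  proof -
    have "u \<noteq> y" using subtree_depth[OF T u] depth_parent[OF T c] by auto
    show ?thesis
    proof (cases "u \<in> subtree par c d")
      case True
      then have "owner u = c"
        unfolding owner_def using c by (blast intro: the_equality subtree_disjoint[OF T _ c _ u])
      then show ?thesis unfolding \<mu>'_def using \<open>u \<noteq> y\<close> c True by auto
    next
      case False
      have "u \<notin> subtree par c' d" if "par c' = Some y" for c'
        using subtree_disjoint[OF T that c _ u] False by blast
      then show ?thesis unfolding \<mu>'_def using \<open>u \<noteq> y\<close> M_out[OF c False] by auto
    qed
  qed
  moreover have "\<mu>' u = \<mu> u" if "u \<notin> subtree par y (Suc d)" for u
    using that unfolding \<mu>'_def by auto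
  moreover have "\<mu>' y = Some z" unfolding \<mu>'_def by simp
  ultimately show ?thesis using that by blast
qed

lemma relaxed_ok_relabelled_top:
  assumes blank: "\<And>u. (\<mu>' u = None) = (\<mu> u = None)" and top: "\<mu>' y = Some z"
    and children: "\<And>u. par u = Some y \<Longrightarrow> \<mu> u \<noteq> None \<Longrightarrow> \<mu>' u = Some (ch u)"
    and fits: "near_blank par \<mu> y \<or> strict_ok par (\<lambda>u. Some (if u = y then z else ch u)) y"
  shows "relaxed_ok par \<mu>' y"
proof (cases "near_blank par \<mu> y")
  case True
  then show ?thesis using near_blank_cong[of \<mu>' \<mu>, OF blank] unfolding relaxed_ok_def by simp
next
  case False
  have "strict_ok par \<mu>' y = strict_ok par (\<lambda>u. Some (if u = y then z else ch u)) y"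
  proof (rule strict_ok_cong)
    show "\<mu>' u = Some (if u = y then z else ch u)" if "par u = Some y" for u
      using False children[OF that] top that unfolding near_blank_def by auto
  qed (simp add: top)
  then show ?thesis using fits False unfolding relaxed_ok_def by simp
qed

lemma fixes_region_glue:
  assumes T: "rooted_binary_tree V par" and y: "\<mu> y \<noteq> None" and z: "z \<in> colours"
    and M: "\<And>c. par c = Some y \<Longrightarrow> fixes_region par \<mu> (subtree par c d) (M c)"
    and M_top: "\<And>c. par c = Some y \<Longrightarrow> \<mu> c \<noteq> None \<Longrightarrow> M c c = Some (ch c)"
    and fits: "near_blank par \<mu> y \<or> strict_ok par (\<lambda>u. Some (if u = y then z else ch u)) y"
    and top: "\<mu>' y = Some z"
    and below: "\<And>c u. par c = Some y \<Longrightarrow> u \<in> subtree par c (Suc d) \<Longrightarrow> \<mu>' u = M c u"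
    and out: "\<And>u. u \<notin> subtree par y (Suc d) \<Longrightarrow> \<mu>' u = \<mu> u"
  shows "fixes_region par \<mu> (subtree par y (Suc d)) \<mu>'"
proof -
  have M_blank: "(M c u = None) = (\<mu> u = None)" if "par c = Some y" for c u
    using M[OF that] unfolding fixes_region_def by blast
  have "(\<mu>' u = None) = (\<mu> u = None) \<and> (\<mu>' u = \<mu> u \<or> \<mu>' u \<in> Some ` colours)" for u
  proof -
    consider "u \<notin> subtree par y (Suc d)" | "u = y"
      | c where "par c = Some y" "u \<in> subtree par c (Suc d)"
      using subtree_subset_Suc by fastforce
    then show ?thesis
      using out top y z below M unfolding fixes_region_def by cases auto
  qed
  then have blank: "\<And>u. (\<mu>' u = None) = (\<mu> u = None)"
    and new_labels: "\<And>u. \<mu>' u = \<mu> u \<or> \<mu>' u \<in> Some ` colours"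
    by blast+
  have "relaxed_ok par \<mu>' y"
    using relaxed_ok_relabelled_top[OF blank top _ fits] below[OF _ subtree_self] M_top by simp
  moreover have "relaxed_ok par \<mu>' w" if c: "par c = Some y" and w: "w \<in> subtree par c d" for c w
  proof -
    have "relaxed_ok par \<mu>' w = relaxed_ok par (M c) w"
    proof (rule relaxed_ok_cong)
      show "(\<mu>' u = None) = (M c u = None)" for u using blank M_blank[OF c] by simp
      show "\<mu>' w = M c w" using below[OF c] w subtree_subset_Suc by blast
      show "\<mu>' u = M c u" if "par u = Some w" for u by (rule below[OF c subtree_child[OF w that]])
    qed
    then show ?thesis using M[OF c] w unfolding fixes_region_def by blast
  qed
  ultimately have "\<forall>w\<in>subtree par y (Suc d). relaxed_ok par \<mu>' w" by auto
  then show ?thesis unfolding fixes_region_def using out blank new_labels by blast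
qed

lemma achievable_step:
  assumes T: "rooted_binary_tree V par" and y: "\<mu> y \<noteq> None" and z: "z \<in> colours"
    and children: "\<And>c. par c = Some y \<Longrightarrow>
      (\<mu> c = None \<and> (\<forall>w\<in>subtree par c d. relaxed_ok par \<mu> w)) \<or> achievable par \<mu> c d (ch c)"
    and fits: "near_blank par \<mu> y \<or> strict_ok par (\<lambda>u. Some (if u = y then z else ch u)) y"
  shows "achievable par \<mu> y (Suc d) z"
proof -
  have "\<exists>\<mu>'. fixes_region par \<mu> (subtree par c d) \<mu>' \<and> (\<mu> c \<noteq> None \<longrightarrow> \<mu>' c = Some (ch c))"
    if "par c = Some y" for c
  proof (cases "\<mu> c = None")
    case True
    then show ?thesis
      using children[OF that] achievable_labelled[of par \<mu> c d "ch c"]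
      by (intro exI[of _ \<mu>]) (auto simp: fixes_region_def)
  qed (use children[OF that] in \<open>auto simp: achievable_def\<close>)
  then obtain M where M: "\<And>c. par c = Some y \<Longrightarrow> fixes_region par \<mu> (subtree par c d) (M c)"
    and M_top: "\<And>c. par c = Some y \<Longrightarrow> \<mu> c \<noteq> None \<Longrightarrow> M c c = Some (ch c)"
    by metis
  obtain \<mu>' where "\<mu>' y = Some z"
    and "\<And>c u. par c = Some y \<Longrightarrow> u \<in> subtree par c (Suc d) \<Longrightarrow> \<mu>' u = M c u"
    and "\<And>u. u \<notin> subtree par y (Suc d) \<Longrightarrow> \<mu>' u = \<mu> u"
    using glued_labelling[OF T, of y d M \<mu> z] M unfolding fixes_region_def by blast
  then show ?thesis
    unfolding achievable_def using fixes_region_glue[OF T y z M M_top fits] by blast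
qed

lemma flexible_achievable_0:
  assumes T: "rooted_binary_tree V par" and c: "\<mu> c \<noteq> None" "\<mu> c \<noteq> Some 3"
    and ok: "relaxed_ok par \<mu> c"
  shows "flexible (achievable par \<mu> c 0)"
proof (cases "near_blank par \<mu> c")
  case True
  then have "near_blank par (\<mu>(c := Some z)) c" for z
    using c(1) parent_neq[OF T] unfolding near_blank_def by fastforce
  then have "achievable par \<mu> c 0 z" if "z \<in> colours" for z
    using achievable_0[where par=par and \<mu>=\<mu> and y=c, OF c(1) that]
    unfolding relaxed_ok_def by blast
  then show ?thesis by (rule flexible_if_avoid)
next
  case False
  then have strict: "strict_ok par \<mu> c" using ok unfolding relaxed_ok_def by simp
  then have "\<forall>u u'. par u = Some c \<longrightarrow> par u' = Some c \<longrightarrow> \<mu> u = \<mu> u'"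
    using c(2) unfolding strict_ok_def by blast
  then obtain e where e: "\<And>u. par u = Some c \<Longrightarrow> \<mu> u = Some e"
    using children_same_colour False by blast
  have "achievable par \<mu> c 0 z" if "z \<in> colours" "z \<noteq> e" for z
  proof (rule achievable_0[where par=par and \<mu>=\<mu> and y=c, OF c(1) that(1)])
    have "strict_ok par (\<mu>(c := Some z)) c"
      unfolding strict_ok_def using e parent_neq[OF T] that(2) by auto
    then show "relaxed_ok par (\<mu>(c := Some z)) c" unfolding relaxed_ok_def by simp
  qed
  then show ?thesis by (rule flexible_if_avoid)
qed

lemma achievable_near_blank:
  assumes T: "rooted_binary_tree V par" and y: "\<mu> y \<noteq> None" "near_blank par \<mu> y"
    and z: "z \<in> colours"
    and children: "\<And>c. par c = Some y \<Longrightarrow>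
      (\<mu> c = None \<and> (\<forall>w\<in>subtree par c d. relaxed_ok par \<mu> w)) \<or> (\<exists>a. achievable par \<mu> c d a)"
  shows "achievable par \<mu> y (Suc d) z"
proof (rule achievable_step[where \<mu>=\<mu> and y=y, OF T y(1) z])
  show "(\<mu> c = None \<and> (\<forall>w\<in>subtree par c d. relaxed_ok par \<mu> w)) \<or>
      achievable par \<mu> c d (SOME a. achievable par \<mu> c d a)" if "par c = Some y" for c
    using children[OF that] someI_ex[of "achievable par \<mu> c d"] by blast
qed (use y(2) in blast)

lemma children_common_colour:
  assumes T: "rooted_binary_tree V par" and y: "y \<in> V"
    and blank: "\<not> near_blank par \<mu> y" and strict: "strict_ok par \<mu> y"
    and child_ok: "\<And>c. par c = Some y \<Longrightarrow> relaxed_ok par \<mu> c"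
  obtains m where "\<And>c. par c = Some y \<Longrightarrow> achievable par \<mu> c 0 m"
proof (cases "\<forall>u u'. par u = Some y \<longrightarrow> par u' = Some y \<longrightarrow> \<mu> u = \<mu> u'")
  case True
  then obtain e where e: "\<And>u. par u = Some y \<Longrightarrow> \<mu> u = Some e"
    using children_same_colour blank by blast
  have "achievable par \<mu> c 0 e" if "par c = Some y" for c
    using achievable_keep[of \<mu> c e par 0] e[OF that] child_ok[OF that] by simp
  then show ?thesis by (rule that)
next
  case False
  then have y3: "\<mu> y = Some 3" using strict unfolding strict_ok_def by blast
  have "flexible (achievable par \<mu> c 0)" if c: "par c = Some y" for c
  proof (rule flexible_achievable_0[OF T _ _ child_ok[OF c]])
    show "\<mu> c \<noteq> None" using blank c unfolding near_blank_def by auto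
    show "\<mu> c \<noteq> Some 3" using strict c y3 unfolding strict_ok_def by metis
  qed
  then show ?thesis
    using that flexible_common_choice[OF T y, where A="\<lambda>c. achievable par \<mu> c 0"] by blast
qed

lemma flexible_achievable_1:
  assumes T: "rooted_binary_tree V par" and y: "y \<in> V" "\<mu> y \<noteq> None"
    and ok: "\<forall>w\<in>subtree par y 1. relaxed_ok par \<mu> w"
  shows "flexible (achievable par \<mu> y 1)"
proof -
  have child_ok: "relaxed_ok par \<mu> c" if "par c = Some y" for c
    using ok that by (auto simp: One_nat_def)
  show ?thesis
  proof (cases "near_blank par \<mu> y")
    case True
    have "(\<mu> c = None \<and> (\<forall>w\<in>subtree par c 0. relaxed_ok par \<mu> w)) \<or>
        (\<exists>a. achievable par \<mu> c 0 a)" if "par c = Some y" for c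
      using achievable_keep[of \<mu> c _ par 0] child_ok[OF that] by (cases "\<mu> c") auto
    then have "achievable par \<mu> y 1 z" if "z \<in> colours" for z
      using achievable_near_blank[OF T y(2) True that] by (simp add: One_nat_def)
    then show ?thesis by (rule flexible_if_avoid)
  next
    case False
    have strict: "strict_ok par \<mu> y"
      using False ok subtree_self[of y par 1] unfolding relaxed_ok_def by blast
    obtain m where m: "\<And>c. par c = Some y \<Longrightarrow> achievable par \<mu> c 0 m"
      using children_common_colour[OF T y(1) False strict child_ok] by blast
    have "achievable par \<mu> y (Suc 0) z" if "z \<in> colours" "z \<noteq> m" for z
    proof (rule achievable_step[where \<mu>=\<mu> and y=y and ch="\<lambda>_. m", OF T y(2) that(1)])
      have "strict_ok par (\<lambda>u. Some (if u = y then z else m)) y"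
        by (rule strict_ok_choice[OF T]) (use that in auto)
      then show "near_blank par \<mu> y \<or> strict_ok par (\<lambda>u. Some (if u = y then z else m)) y" ..
    qed (use m in auto)
    then show ?thesis by (intro flexible_if_avoid) (simp add: One_nat_def)
  qed
qed

lemma flexible3_achievable_Suc:
  assumes T: "rooted_binary_tree V par" and y: "y \<in> V" "\<mu> y \<noteq> None"
    and children: "\<And>c. par c = Some y \<Longrightarrow>
      (\<mu> c = None \<and> (\<forall>w\<in>subtree par c d. relaxed_ok par \<mu> w)) \<or> flexible (achievable par \<mu> c d)"
  shows "flexible3 (achievable par \<mu> y (Suc d))"
proof -
  note step = achievable_step[where \<mu>=\<mu> and y=y, OF T y(2)]
  have three: "3 \<in> colours" and one: "1 \<in> colours" unfolding colours_def by simp_all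
  show ?thesis
  proof (cases "near_blank par \<mu> y")
    case True
    have "(\<mu> c = None \<and> (\<forall>w\<in>subtree par c d. relaxed_ok par \<mu> w)) \<or> (\<exists>a. achievable par \<mu> c d a)"
      if "par c = Some y" for c
      using children[OF that] unfolding flexible_def by blast
    then have "achievable par \<mu> y (Suc d) 3" "achievable par \<mu> y (Suc d) 1"
      using achievable_near_blank[OF T y(2) True] three one by blast+
    then show ?thesis unfolding flexible3_def using one by force
  next
    case False
    then have flex: "flexible (achievable par \<mu> c d)" if "par c = Some y" for c
      using children[OF that] that unfolding near_blank_def by auto
    define ch where "ch c = (SOME a. a \<in> colours \<and> a \<noteq> 3 \<and> achievable par \<mu> c d a)" for c
    have ch: "ch c \<in> colours \<and> ch c \<noteq> 3 \<and> achievable par \<mu> c d (ch c)" if "par c = Some y" for c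
    proof -
      have "\<exists>a. a \<in> colours \<and> a \<noteq> 3 \<and> achievable par \<mu> c d a"
        using flexible_avoid[OF flex[OF that], of 3] by blast
      from someI_ex[OF this] show ?thesis unfolding ch_def .
    qed
    have "strict_ok par (\<lambda>u. Some (if u = y then 3 else ch u)) y"
      by (rule strict_ok_choice[OF T]) (use ch in auto)
    then have A3: "achievable par \<mu> y (Suc d) 3" using step[OF three, where ch=ch] ch by blast
    obtain m where m: "\<And>c. par c = Some y \<Longrightarrow> achievable par \<mu> c d m"
      using flexible_common_choice[OF T y(1), where A="\<lambda>c. achievable par \<mu> c d"] flex by blast
    obtain z where z: "z \<in> colours" "z \<noteq> m" "z \<noteq> 3" using colours_avoid by blast
    have "strict_ok par (\<lambda>u. Some (if u = y then z else m)) y"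
      by (rule strict_ok_choice[OF T]) (use z in auto)
    then have "achievable par \<mu> y (Suc d) z" using step[OF z(1), where ch="\<lambda>_. m"] m by blast
    then show ?thesis unfolding flexible3_def using A3 z by blast
  qed
qed

lemma flexible3_achievable_2:
  assumes T: "rooted_binary_tree V par" and y: "y \<in> V" "\<mu> y \<noteq> None"
    and ok: "\<And>w. w \<in> subtree par y 2 \<Longrightarrow> w \<noteq> y \<Longrightarrow> relaxed_ok par \<mu> w"
  shows "flexible3 (achievable par \<mu> y 2)"
proof -
  have "flexible3 (achievable par \<mu> y (Suc 1))"
  proof (rule flexible3_achievable_Suc[where \<mu>=\<mu> and y=y, OF T y])
    fix c assume c: "par c = Some y"
    have "\<forall>w\<in>subtree par c 1. relaxed_ok par \<mu> w"
    proof
      fix w assume w: "w \<in> subtree par c 1"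
      show "relaxed_ok par \<mu> w"
      proof (rule ok)
        show "w \<in> subtree par y 2"
          using w subtree_child_subset[of par c y 1, OF c] unfolding Suc_1 by blast
        show "w \<noteq> y" using subtree_depth[OF T w] depth_parent[OF T c] by auto
      qed
    qed
    then show "(\<mu> c = None \<and> (\<forall>w\<in>subtree par c 1. relaxed_ok par \<mu> w)) \<or>
        flexible (achievable par \<mu> c 1)"
      using flexible_achievable_1[OF T rooted_binary_tree_parent_in(1)[OF T c]] by blast
  qed
  then show ?thesis by (simp add: numeral_eq_Suc)
qed

text \<open>The hypothesis describes the situation right after a blank node \<open>y\<close> has been
  filled: only \<open>y\<close> and its children may be unhappy.\<close>

lemma flexible3_achievable_3:
  assumes T: "rooted_binary_tree V par" and y: "y \<in> V" "\<mu> y \<noteq> None"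
    and deep_ok: "\<And>w. w \<in> subtree par y 3 \<Longrightarrow> depth par y + 2 \<le> depth par w \<Longrightarrow> relaxed_ok par \<mu> w"
  shows "flexible3 (achievable par \<mu> y 3)"
proof -
  have "flexible3 (achievable par \<mu> y (Suc 2))"
  proof (rule flexible3_achievable_Suc[where \<mu>=\<mu> and y=y, OF T y])
    fix c assume c: "par c = Some y"
    have below_c: "relaxed_ok par \<mu> w" if w: "w \<in> subtree par c 2" "w \<noteq> c" for w
    proof (rule deep_ok)
      have "Suc 2 = (3 :: nat)" by simp
      then show "w \<in> subtree par y 3"
        using w subtree_child_subset[of par c y 2, OF c] by auto
      show "depth par y + 2 \<le> depth par w"
        using subtree_depth_less[OF T w] depth_parent[OF T c] by simp
    qed
    show "(\<mu> c = None \<and> (\<forall>w\<in>subtree par c 2. relaxed_ok par \<mu> w)) \<or>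
        flexible (achievable par \<mu> c 2)"
    proof (cases "\<mu> c = None")
      case True
      then have "relaxed_ok par \<mu> c" unfolding relaxed_ok_def near_blank_def by simp
      then show ?thesis using True below_c by blast
    next
      case False
      then show ?thesis
        using flexible3_achievable_2[OF T rooted_binary_tree_parent_in(1)[OF T c] False below_c]
          flexible3_imp_flexible by blast
    qed
  qed
  then show ?thesis by (simp add: numeral_eq_Suc)
qed

lemma achievable_keep_colour:
  assumes T: "rooted_binary_tree V par" and p: "\<mu> p = Some a" "a \<in> colours"
    and children: "\<And>c. par c = Some p \<Longrightarrow>
      (\<mu> c = None \<and> (\<forall>w\<in>subtree par c d. relaxed_ok par \<mu> w)) \<or> flexible3 (achievable par \<mu> c d)"
  shows "achievable par \<mu> p (Suc d) a"
proof -
  define ch where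
    "ch c = (if a = 3 then SOME x. x \<in> colours \<and> x \<noteq> 3 \<and> achievable par \<mu> c d x else 3)" for c
  have ch: "achievable par \<mu> c d (ch c) \<and> ch c \<noteq> a"
    if c: "par c = Some p" and "flexible3 (achievable par \<mu> c d)" for c
  proof (cases "a = 3")
    case True
    have "\<exists>x. x \<in> colours \<and> x \<noteq> 3 \<and> achievable par \<mu> c d x"
      using that(2) unfolding flexible3_def by blast
    from someI_ex[OF this] show ?thesis unfolding ch_def using True by simp
  qed (use that(2) in \<open>simp add: ch_def flexible3_def\<close>)
  have "near_blank par \<mu> p \<or> strict_ok par (\<lambda>u. Some (if u = p then a else ch u)) p"
  proof (cases "near_blank par \<mu> p")
    case False
    then have "flexible3 (achievable par \<mu> c d)" if "par c = Some p" for c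
      using children[OF that] that unfolding near_blank_def by auto
    then have "ch c \<noteq> a" if "par c = Some p" for c
      using ch that by blast
    moreover have "ch c = ch c'" if "a \<noteq> 3" for c c'
      using that unfolding ch_def by simp
    ultimately have "strict_ok par (\<lambda>u. Some (if u = p then a else ch u)) p"
      by (intro strict_ok_choice[OF T]) blast+
    then show ?thesis ..
  qed simp
  moreover have
    "(\<mu> c = None \<and> (\<forall>w\<in>subtree par c d. relaxed_ok par \<mu> w)) \<or> achievable par \<mu> c d (ch c)"
    if "par c = Some p" for c
    using children[OF that] ch[OF that] by blast
  ultimately show ?thesis using achievable_step[where \<mu>=\<mu> and y=p, OF T _ p(2)] p(1) by blast
qed

lemma partial_labeling_fixes_region:
  assumes "partial_labeling colours V \<mu>" "fixes_region par \<mu> R \<mu>'"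
  shows "partial_labeling colours V \<mu>'"
  unfolding partial_labeling_def
proof
  fix u assume "u \<in> V"
  then have "\<mu> u = None \<or> (\<exists>g\<in>colours. \<mu> u = Some g)"
    using assms(1) unfolding partial_labeling_def by blast
  moreover have "\<mu>' u = \<mu> u \<or> \<mu>' u \<in> Some ` colours"
    using assms(2) unfolding fixes_region_def by blast
  ultimately show "\<mu>' u = None \<or> (\<exists>g\<in>colours. \<mu>' u = Some g)" by auto
qed

lemma fixes_region_relaxed_ok_outside:
  assumes fixed: "fixes_region par \<mu> (subtree par y D) \<mu>'" and w: "w \<notin> subtree par y D"
    and ok: "relaxed_ok par \<mu> w" and top: "\<mu>' y = \<mu> y \<or> (\<forall>p. par y = Some p \<longrightarrow> \<mu> p = None)"
  shows "relaxed_ok par \<mu>' w"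
proof -
  have out: "\<And>u. u \<notin> subtree par y D \<Longrightarrow> \<mu>' u = \<mu> u"
    and blank: "\<And>u. (\<mu>' u = None) = (\<mu> u = None)"
    using fixed unfolding fixes_region_def by blast+
  show ?thesis
  proof (cases "\<mu> w = None")
    case True
    then show ?thesis using blank unfolding relaxed_ok_def near_blank_def by simp
  next
    case False
    have "relaxed_ok par \<mu>' w = relaxed_ok par \<mu> w"
    proof (rule relaxed_ok_cong[where \<mu>=\<mu>' and \<mu>'=\<mu> and w=w, OF blank out[OF w]])
      fix u assume u: "par u = Some w"
      show "\<mu>' u = \<mu> u"
      proof (cases "u \<in> subtree par y D")
        case True
        then have "u = y" using subtree_parent[OF True _ u] w by blast
        then show ?thesis using top u False by auto
      qed (rule out)
    qed
    then show ?thesis using ok by simp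
  qed
qed

text \<open>The colour 1 given to the blank node \<open>v\<close> is provisional: \<open>v\<close> lies in the region
  that is relabelled.\<close>

lemma mend_of_achievable:
  assumes T: "rooted_binary_tree V par" and PL: "partial_labeling colours V \<mu>"
    and v: "v \<in> V" "\<mu> v = None"
    and A: "achievable par (\<mu>(v := Some 1)) y D z"
    and ok: "\<forall>w\<in>V. relaxed_ok par \<mu> w"
    and R_ball: "subtree par y D \<subseteq> ball par v 5"
    and v_in: "v \<in> subtree par y D" and children_in: "\<And>c. par c = Some v \<Longrightarrow> c \<in> subtree par y D"
    and parent_in: "\<And>w. par v = Some w \<Longrightarrow> w \<in> subtree par y D \<or> \<mu> w = None"
    and top: "(\<mu>(v := Some 1)) y = Some z \<or> (\<forall>w. par y = Some w \<longrightarrow> (\<mu>(v := Some 1)) w = None)"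
  shows "\<exists>\<mu>'. is_mend colours 1 strict_verifier 5 V par \<mu> v \<mu>'"
proof -
  define \<mu>0 where "\<mu>0 = \<mu>(v := Some 1)"
  let ?R = "subtree par y D"
  obtain \<mu>' where y_z: "\<mu>' y = Some z" and fixed: "fixes_region par \<mu>0 ?R \<mu>'"
    using A unfolding achievable_def \<mu>0_def by blast
  have out: "\<And>u. u \<notin> ?R \<Longrightarrow> \<mu>' u = \<mu>0 u" and blank: "\<And>u. (\<mu>' u = None) = (\<mu>0 u = None)"
    using fixed unfolding fixes_region_def by blast+
  have "partial_labeling colours V \<mu>0"
    using PL unfolding partial_labeling_def \<mu>0_def colours_def by auto
  then have PL': "partial_labeling colours V \<mu>'" using partial_labeling_fixes_region fixed by blast
  have ok': "relaxed_ok par \<mu>' w" if w: "w \<in> V" for w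
  proof (cases "w \<in> ?R")
    case False
    have "relaxed_ok par \<mu>0 w"
    proof (cases "par v = Some w")
      case True
      then have "\<mu>0 w = None" using parent_in False parent_neq[OF T True] unfolding \<mu>0_def by auto
      then show ?thesis unfolding relaxed_ok_def near_blank_def by simp
    next
      case not_parent: False
      have "w \<noteq> v" "par w \<noteq> Some v" using False v_in children_in by blast+
      then show ?thesis
        unfolding \<mu>0_def by (rule relaxed_ok_update_far[OF ok[rule_format, OF w] _ _ not_parent])
    qed
    moreover have "\<mu>' y = \<mu>0 y \<or> (\<forall>p. par y = Some p \<longrightarrow> \<mu>0 p = None)"
      using top y_z unfolding \<mu>0_def by auto
    ultimately show ?thesis by (rule fixes_region_relaxed_ok_outside[OF fixed False])
  qed (use fixed in \<open>auto simp: fixes_region_def\<close>)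
  have "\<forall>u\<in>V. \<mu>' u \<noteq> \<mu> u \<longrightarrow> u \<in> ball par v 5"
  proof (intro ballI impI)
    fix u assume "\<mu>' u \<noteq> \<mu> u"
    then have "u = v \<or> u \<in> ?R" using out[of u] unfolding \<mu>0_def by (cases "u = v") auto
    then show "u \<in> ball par v 5" using R_ball center_in_ball by blast
  qed
  moreover have "\<forall>u\<in>V. \<mu>' u = None \<longrightarrow> \<mu> u = None"
    using blank unfolding \<mu>0_def by (metis fun_upd_apply option.distinct(1))
  moreover have "\<mu>' v \<noteq> None" using blank unfolding \<mu>0_def by simp
  moreover have "relaxed_accepts colours 1 strict_verifier V par \<mu>'"
    unfolding relaxed_accepts_def using relaxed_happy_iff_relaxed_ok[OF PL'] ok' by blast
  ultimately show ?thesis unfolding is_mend_def using PL' by blast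
qed

lemma flexible3_after_fill:
  assumes T: "rooted_binary_tree V par" and ok: "\<forall>w\<in>V. relaxed_ok par \<mu> w"
    and v: "v \<in> V" and c: "c \<in> V" and sibling: "c = v \<or> (\<exists>p. par c = Some p \<and> par v = Some p)"
  shows "((\<mu>(v := Some a)) c = None \<and> (\<forall>w\<in>subtree par c 3. relaxed_ok par (\<mu>(v := Some a)) w)) \<or>
    flexible3 (achievable par (\<mu>(v := Some a)) c 3)"
proof -
  let ?\<mu>0 = "\<mu>(v := Some a)"
  have far: "relaxed_ok par ?\<mu>0 w"
    if w: "w \<in> subtree par c 3" and deep: "c \<noteq> v \<or> depth par c + 2 \<le> depth par w" for w
  proof -
    have "w \<noteq> v \<and> par w \<noteq> Some v \<and> par v \<noteq> Some w"
    proof (cases "c = v")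
      case True
      then show ?thesis
        using deep depth_parent[OF T, of w v] depth_parent[OF T, of v w] by auto
    next
      case False
      then obtain p where "par c = Some p" "par v = Some p" using sibling by blast
      then show ?thesis using subtree_sibling_far[OF T _ _ False w] by blast
    qed
    moreover have "w \<in> V" using subtree_subset[OF T c] w by blast
    ultimately show ?thesis using relaxed_ok_update_far[OF ok[rule_format]] by blast
  qed
  show ?thesis
  proof (cases "?\<mu>0 c = None")
    case True
    then have "c \<noteq> v" by auto
    then show ?thesis using True far by blast
  next
    case False
    then show ?thesis using flexible3_achievable_3[where \<mu>="?\<mu>0" and y=c, OF T c False] far by blast
  qed
qed

lemma mend_without_labelled_parent:
  assumes T: "rooted_binary_tree V par" and PL: "partial_labeling colours V \<mu>"
    and v: "v \<in> V" "\<mu> v = None" and ok: "\<forall>w\<in>V. relaxed_ok par \<mu> w"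
    and top: "\<And>p. par v = Some p \<Longrightarrow> \<mu> p = None"
  shows "\<exists>\<mu>'. is_mend colours 1 strict_verifier 5 V par \<mu> v \<mu>'"
proof -
  have "flexible3 (achievable par (\<mu>(v := Some 1)) v 3)"
    using flexible3_after_fill[OF T ok v(1) v(1), of 1] by simp
  then have "achievable par (\<mu>(v := Some 1)) v 3 3" unfolding flexible3_def by blast
  then show ?thesis
  proof (rule mend_of_achievable[OF T PL v _ ok])
    show "subtree par v 3 \<subseteq> ball par v 5"
      using subtree_subset_ball[of par v 3] ball_mono[of 3 5 par v] by simp
    show "v \<in> subtree par v 3" by (rule subtree_self)
    show "c \<in> subtree par v 3" if "par c = Some v" for c
      using subtree_child[OF subtree_self[of v par 2] that] by (simp add: numeral_eq_Suc)
    show "w \<in> subtree par v 3 \<or> \<mu> w = None" if "par v = Some w" for w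
      using top that by simp
    have "(\<mu>(v := Some 1)) w = None" if "par v = Some w" for w
      using top[OF that] parent_neq[OF T that] by simp
    then show "(\<mu>(v := Some 1)) v = Some 3 \<or> (\<forall>w. par v = Some w \<longrightarrow> (\<mu>(v := Some 1)) w = None)"
      by blast
  qed
qed

lemma mend_below_labelled_parent:
  assumes T: "rooted_binary_tree V par" and PL: "partial_labeling colours V \<mu>"
    and v: "v \<in> V" "\<mu> v = None" and ok: "\<forall>w\<in>V. relaxed_ok par \<mu> w"
    and p: "par v = Some p" "\<mu> p = Some a"
  shows "\<exists>\<mu>'. is_mend colours 1 strict_verifier 5 V par \<mu> v \<mu>'"
proof -
  have p_ne: "p \<noteq> v" using parent_neq[OF T p(1)] by simp
  have a: "a \<in> colours"
    using PL rooted_binary_tree_parent_in(2)[OF T p(1)] p(2) unfolding partial_labeling_def by force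
  have "achievable par (\<mu>(v := Some 1)) p (Suc 3) a"
  proof (rule achievable_keep_colour[OF T _ a])
    show "(\<mu>(v := Some 1)) p = Some a" using p(2) p_ne by simp
    show "((\<mu>(v := Some 1)) c = None \<and> (\<forall>w\<in>subtree par c 3. relaxed_ok par (\<mu>(v := Some 1)) w)) \<or>
        flexible3 (achievable par (\<mu>(v := Some 1)) c 3)" if "par c = Some p" for c
      using flexible3_after_fill[OF T ok v(1) rooted_binary_tree_parent_in(1)[OF T that]] that p(1)
      by blast
  qed
  then show ?thesis
  proof (rule mend_of_achievable[OF T PL v _ ok])
    have "p \<in> ball par v 1" using p(1) ball_1 by blast
    then have "ball par p 4 \<subseteq> ball par v (1 + 4)" using ball_trans[of p par v 1] by blast
    then show "subtree par p (Suc 3) \<subseteq> ball par v 5"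
      using subtree_subset_ball[of par p 4] by simp
    have v3: "v \<in> subtree par p 3"
      using subtree_child[OF subtree_self[of p par 2] p(1)] by (simp add: numeral_eq_Suc)
    then show "v \<in> subtree par p (Suc 3)" using subtree_subset_Suc by blast
    show "c \<in> subtree par p (Suc 3)" if "par c = Some v" for c
      by (rule subtree_child[OF v3 that])
    show "w \<in> subtree par p (Suc 3) \<or> \<mu> w = None" if "par v = Some w" for w
      using p(1) that subtree_self by simp
    show "(\<mu>(v := Some 1)) p = Some a \<or> (\<forall>w. par p = Some w \<longrightarrow> (\<mu>(v := Some 1)) w = None)"
      using p(2) p_ne by simp
  qed
qed

lemma three_col_strict_mend:
  assumes T: "rooted_binary_tree V par" and PL: "partial_labeling colours V \<mu>"
    and RA: "relaxed_accepts colours 1 strict_verifier V par \<mu>" and v: "v \<in> V"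
  shows "\<exists>\<mu>'. is_mend colours 1 strict_verifier 5 V par \<mu> v \<mu>'"
proof (cases "\<mu> v")
  case Some
  then show ?thesis unfolding is_mend_def using PL RA by (intro exI[of _ \<mu>]) simp
next
  case None
  have ok: "\<forall>w\<in>V. relaxed_ok par \<mu> w"
    using RA relaxed_happy_iff_relaxed_ok[OF PL] unfolding relaxed_accepts_def by blast
  show ?thesis
  proof (cases "\<exists>p a. par v = Some p \<and> \<mu> p = Some a")
    case True
    then show ?thesis using mend_below_labelled_parent[OF T PL v None ok] by blast
  next
    case False
    then show ?thesis using mend_without_labelled_parent[OF T PL v None ok] by auto
  qed
qed

lemma three_col_strict_O1_mendable: "O1_mendable colours three_col_strict"
  unfolding O1_mendable_def
  using strict_verifier_is_verifier three_col_strict_verifies three_col_strict_mend by blast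

section \<open>Round complexity\<close>

lemma restricted_parent_Some:
  "(if x \<in> B then (case P x of Some p \<Rightarrow> if p \<in> B then Some p else None | None \<Rightarrow> None)
    else None) = Some y \<longleftrightarrow> x \<in> B \<and> y \<in> B \<and> P x = Some y"
  by (auto split: option.splits)

lemma view_eq_iff:
  "view par T v = view par' T v \<longleftrightarrow> ball par v T = ball par' v T \<and>
     (\<forall>x\<in>ball par v T. \<forall>y\<in>ball par v T. par x = Some y \<longleftrightarrow> par' x = Some y)"
  (is "?lhs \<longleftrightarrow> ?B = ?B' \<and> ?edges")
proof -
  let ?r = "\<lambda>P B u. if u \<in> B
    then (case P u of Some p \<Rightarrow> if p \<in> B then Some p else None | None \<Rightarrow> None) else None"
  have "?lhs \<longleftrightarrow> ?B = ?B' \<and> ?r par ?B = ?r par' ?B'"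
    unfolding view_def by simp
  also have "\<dots> \<longleftrightarrow> ?B = ?B' \<and> ?r par ?B = ?r par' ?B"
    \<comment> \<open>plain \<open>refl\<close> would name the introduction rule of \<open>walk_le\<close>\<close>
    by (rule conj_cong[OF HOL.refl]) (simp only:)
  also have "?r par ?B = ?r par' ?B \<longleftrightarrow> ?edges"
  proof
    assume r: "?r par ?B = ?r par' ?B"
    show ?edges
    proof (intro ballI)
      fix x y assume "x \<in> ?B" "y \<in> ?B"
      then show "par x = Some y \<longleftrightarrow> par' x = Some y"
        using restricted_parent_Some[of x ?B par y] restricted_parent_Some[of x ?B par' y]
          fun_cong[OF r, of x]
        by simp
    qed
  next
    assume edges: ?edges
    show "?r par ?B = ?r par' ?B"
    proof
      fix x
      show "?r par ?B x = ?r par' ?B x"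
      proof (cases "?r par ?B x")
        case None
        then have "?r par' ?B x = None"
          using restricted_parent_Some[of x ?B par] restricted_parent_Some[of x ?B par'] edges
          by (cases "?r par' ?B x") auto
        then show ?thesis using None by simp
      next
        case (Some y)
        then show ?thesis
          using restricted_parent_Some[of x ?B par y] restricted_parent_Some[of x ?B par' y] edges
          by auto
      qed
    qed
  qed
  finally show ?thesis .
qed

lemma walk_le_transfer:
  assumes "walk_le par k a b"
    and "\<And>x y. x \<in> ball par a k \<Longrightarrow> y \<in> ball par a k \<Longrightarrow> adj par x y \<Longrightarrow> adj par' x y"
  shows "walk_le par' k a b"
  using assms
proof (induction k a b rule: walk_le.induct)
  case (refl k u)
  show ?case by (rule walk_le.refl)
next
  case (step k u v w)
  have "adj par' x y" if "x \<in> ball par u k" "y \<in> ball par u k" "adj par x y" for x y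
    using step.prems[of x y] that ball_mono[of k "Suc k" par u] by auto
  then have "walk_le par' k u v" by (rule step.IH)
  moreover have "v \<in> ball par u (Suc k)" "w \<in> ball par u (Suc k)"
    using walk_le_add[OF step.hyps(1), of 1] walk_le.step[OF step.hyps]
    unfolding ball_def by simp_all
  then have "adj par' v w" using step.prems step.hyps(2) by blast
  ultimately show ?case by (rule walk_le.step)
qed

lemma view_Suc_neighbour:
  assumes eq: "view par (Suc T) v = view par' (Suc T) v" and w: "w \<in> ball par v 1"
  shows "view par T w = view par' T w"
proof -
  let ?B = "ball par v (Suc T)"
  have B: "ball par' v (Suc T) = ?B"
    and edges: "\<And>x y. x \<in> ?B \<Longrightarrow> y \<in> ?B \<Longrightarrow> par x = Some y \<longleftrightarrow> par' x = Some y"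
    using eq unfolding view_eq_iff by auto
  have adj_iff: "adj par x y \<longleftrightarrow> adj par' x y" if "x \<in> ?B" "y \<in> ?B" for x y
    unfolding adj_def using edges that by blast
  have w_B: "w \<in> ?B" using w ball_mono[of 1 "Suc T" par v] by auto
  have "w \<in> ball par' v 1"
    using w edges[OF center_in_ball w_B] edges[OF w_B center_in_ball] unfolding ball_1 by auto
  then have in_B: "ball par w T \<subseteq> ?B" "ball par' w T \<subseteq> ?B"
    using ball_trans[OF w] ball_trans[of w par' v 1] B by auto
  have "ball par w T = ball par' w T"
  proof (intro equalityI subsetI)
    fix u assume "u \<in> ball par w T"
    then show "u \<in> ball par' w T"
      using walk_le_transfer[of par T w u par'] adj_iff in_B unfolding ball_def by blast
  next
    fix u assume "u \<in> ball par' w T"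
    then show "u \<in> ball par w T"
      using walk_le_transfer[of par' T w u par] adj_iff in_B unfolding ball_def by blast
  qed
  then show ?thesis unfolding view_eq_iff using edges in_B by blast
qed

lemma view_Suc_parent:
  assumes "view par (Suc T) v = view par' (Suc T) v"
  shows "par v = par' v"
proof -
  let ?B = "ball par v (Suc T)"
  have B: "ball par' v (Suc T) = ?B"
    and edges: "\<And>x y. x \<in> ?B \<Longrightarrow> y \<in> ?B \<Longrightarrow> par x = Some y \<longleftrightarrow> par' x = Some y"
    using assms unfolding view_eq_iff by auto
  have parent_in: "p \<in> ball P v (Suc T)" if "P v = Some p" for P p
    using ball_mono[of 1 "Suc T" P v] that unfolding ball_1 by auto
  show ?thesis
  proof (cases "par v")
    case None
    then show ?thesis
      using edges[OF center_in_ball] parent_in[of par'] B by (cases "par' v") auto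
  next
    case (Some p)
    then show ?thesis using edges[OF center_in_ball parent_in] by simp
  qed
qed

lemma view_0:
  assumes "rooted_binary_tree V par"
  shows "view par 0 v = ({v}, \<lambda>_. None)"
proof -
  have "ball par v 0 = {v}" unfolding ball_def using walk_le_0 walk_le.refl by blast
  moreover have "par v \<noteq> Some v" using parent_neq[OF assms] by blast
  ultimately show ?thesis unfolding view_def by (auto split: option.splits)
qed

lemma view_global:
  assumes T: "rooted_binary_tree V par" and v: "v \<in> V" and n: "card V \<le> n"
  shows "view par (2 * n) v = (V, par)"
proof -
  have "(if u \<in> V then (case par u of Some p \<Rightarrow> if p \<in> V then Some p else None | None \<Rightarrow> None)
      else None) = par u" for u
    using rooted_binary_tree_parent_in[OF T, of u] T unfolding rooted_binary_tree_def
    by (cases "par u") auto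
  then show ?thesis unfolding view_def ball_double_card[OF T v n] by auto
qed

lemma solvable_in_mono:
  assumes "\<And>V par lab. rooted_binary_tree V par \<Longrightarrow> \<Pi>1 V par lab \<Longrightarrow> \<Pi>2 V par lab"
    and "solvable_in \<Pi>1 c n T"
  shows "solvable_in \<Pi>2 c n T"
proof -
  obtain L where "\<forall>V par V' par' v. local_instance c n V par \<longrightarrow> local_instance c n V' par' \<longrightarrow>
      v \<in> V \<longrightarrow> v \<in> V' \<longrightarrow> view par T v = view par' T v \<longrightarrow> L V par v = L V' par' v"
    and "\<forall>V par. local_instance c n V par \<longrightarrow> \<Pi>1 V par (L V par)"
    using assms(2) unfolding solvable_in_def by blast
  then show ?thesis
    unfolding solvable_in_def using assms(1) unfolding local_instance_def by blast
qed

lemma three_col_strict_solvable: "solvable_in three_col_strict c n (2 * n)"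
proof -
  define L :: "nat set \<Rightarrow> (nat \<Rightarrow> nat option) \<Rightarrow> nat \<Rightarrow> nat" where
    "L V par v = (if even (depth par v) then 1 else 2)" for V par v
  have "three_col_strict V par (L V par)" if T: "rooted_binary_tree V par" for V par
    unfolding three_col_strict_def
  proof (intro conjI ballI)
    fix v
    show "L V par v \<in> colours" unfolding L_def colours_def by simp
    have "strict_ok par (\<lambda>u. Some (if u = v then L V par v else L V par u)) v"
      by (rule strict_ok_choice[OF T]) (auto simp: L_def depth_parent[OF T])
    moreover have "(\<lambda>u. Some (if u = v then L V par v else L V par u)) = (\<lambda>u. Some (L V par u))"
      by auto
    ultimately show "strict_verifier V par (L V par) v"
      unfolding strict_verifier_def by simp
  qed
  moreover have "L V par v = L V' par' v"
    if "local_instance c n V par" "local_instance c n V' par'" "v \<in> V" "v \<in> V'"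
      "view par (2 * n) v = view par' (2 * n) v" for V par V' par' v
    using that view_global[of V par v n] view_global[of V' par' v n]
    unfolding local_instance_def by simp
  ultimately show ?thesis
    unfolding solvable_in_def local_instance_def by blast
qed

definition shift_down :: "(nat \<Rightarrow> nat option) \<Rightarrow> (nat \<Rightarrow> nat) \<Rightarrow> nat \<Rightarrow> nat" where
  "shift_down par lab v = (case par v of Some p \<Rightarrow> lab p | None \<Rightarrow> if lab v = 1 then 2 else 1)"

lemma three_col_strict_shift_down:
  assumes T: "rooted_binary_tree V par" and col: "three_col V par lab"
  shows "three_col_strict V par (shift_down par lab)"
  unfolding three_col_strict_def
proof (intro conjI ballI)
  fix v assume v: "v \<in> V"
  show "shift_down par lab v \<in> colours"
    using col rooted_binary_tree_parent_in(2)[OF T]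
    unfolding three_col_def shift_down_def colours_def by (cases "par v") auto
  have "shift_down par lab v \<noteq> lab v"
    using col v unfolding three_col_def shift_down_def by (cases "par v") auto
  then have
    "strict_ok par (\<lambda>u. Some (if u = v then shift_down par lab v else shift_down par lab u)) v"
    by (intro strict_ok_choice[OF T]) (auto simp: shift_down_def)
  moreover have "(\<lambda>u. Some (if u = v then shift_down par lab v else shift_down par lab u)) =
      (\<lambda>u. Some (shift_down par lab u))"
    by auto
  ultimately show "strict_verifier V par (shift_down par lab) v"
    unfolding strict_verifier_def by simp
qed

lemma three_col_strict_from_three_col:
  assumes "solvable_in three_col c n T"
  shows "solvable_in three_col_strict c n (Suc T)"
proof -
  obtain L where L_local: "\<And>V par V' par' v. local_instance c n V par \<Longrightarrow> local_instance c n V' par' \<Longrightarrow>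
      v \<in> V \<Longrightarrow> v \<in> V' \<Longrightarrow> view par T v = view par' T v \<Longrightarrow> L V par v = L V' par' v"
    and L_col: "\<And>V par. local_instance c n V par \<Longrightarrow> three_col V par (L V par)"
    using assms unfolding solvable_in_def by blast
  have "three_col_strict V par (shift_down par (L V par))" if "local_instance c n V par" for V par
    using three_col_strict_shift_down L_col[OF that] that unfolding local_instance_def by blast
  moreover have "shift_down par (L V par) v = shift_down par' (L V' par') v"
    if I: "local_instance c n V par" "local_instance c n V' par'" "v \<in> V" "v \<in> V'"
      and eq: "view par (Suc T) v = view par' (Suc T) v" for V par V' par' v
  proof (cases "par v")
    case None
    have "L V par v = L V' par' v"
      by (rule L_local[OF I view_Suc_neighbour[OF eq center_in_ball]])
    then show ?thesis using None view_Suc_parent[OF eq] unfolding shift_down_def by simp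
  next
    case (Some p)
    have T: "rooted_binary_tree V par" "rooted_binary_tree V' par'"
      using I(1,2) unfolding local_instance_def by blast+
    have "p \<in> ball par v 1" using Some unfolding ball_1 by simp
    then have "L V par p = L V' par' p"
      using L_local[OF I(1,2) _ _ view_Suc_neighbour[OF eq]] Some view_Suc_parent[OF eq]
        rooted_binary_tree_parent_in(2)[OF T(1)] rooted_binary_tree_parent_in(2)[OF T(2)]
      by metis
    then show ?thesis using Some view_Suc_parent[OF eq] unfolding shift_down_def by simp
  qed
  ultimately show ?thesis
    unfolding solvable_in_def by (intro exI[of _ "\<lambda>V par. shift_down par (L V par)"]) blast
qed

definition interval_par :: "nat \<Rightarrow> (nat \<Rightarrow> nat) \<Rightarrow> nat \<Rightarrow> nat option" where
  "interval_par n f k = (if 2 \<le> k \<and> k \<le> n then Some (f k) else None)"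

lemma interval_par_reaches_1:
  assumes f: "\<And>k. 2 \<le> k \<Longrightarrow> k \<le> n \<Longrightarrow> 1 \<le> f k \<and> f k < k" and v: "v \<in> {1..n}"
  shows "\<exists>k. (pstep (interval_par n f) ^^ k) v = 1"
  using v
proof (induction v rule: less_induct)
  case (less v)
  show ?case
  proof (cases "v = 1")
    case False
    then have v: "2 \<le> v" "v \<le> n" using less.prems by auto
    then have "f v \<in> {1..n}" "f v < v" using f[OF v] by auto
    then obtain k where "(pstep (interval_par n f) ^^ k) (f v) = 1" using less.IH by blast
    moreover have "interval_par n f v = Some (f v)" using v unfolding interval_par_def by simp
    ultimately have "(pstep (interval_par n f) ^^ Suc k) v = 1"
      unfolding funpow_Suc_right comp_def by (simp add: pstep_Some)
    then show ?thesis by blast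
  qed (intro exI[of _ 0], simp)
qed

lemma rooted_binary_tree_interval:
  assumes n: "1 \<le> n" and f: "\<And>k. 2 \<le> k \<Longrightarrow> k \<le> n \<Longrightarrow> 1 \<le> f k \<and> f k < k"
    and two: "\<And>m. \<exists>a b. \<forall>k. 2 \<le> k \<longrightarrow> k \<le> n \<longrightarrow> f k = m \<longrightarrow> k = a \<or> k = b"
  shows "rooted_binary_tree {1..n} (interval_par n f)"
  unfolding rooted_binary_tree_def
proof (intro conjI ballI allI impI)
  let ?par = "interval_par n f"
  show "finite {1..n}" "{1..n} \<noteq> {}" using n by simp_all
  show "\<exists>!\<rho>. \<rho> \<in> {1..n} \<and> ?par \<rho> = None"
    using n by (intro ex1I[of _ 1]) (auto simp: interval_par_def split: if_splits)
  show "card {u \<in> {1..n}. ?par u = Some m} \<le> 2" for m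
  proof -
    obtain a b where "\<forall>k. 2 \<le> k \<longrightarrow> k \<le> n \<longrightarrow> f k = m \<longrightarrow> k = a \<or> k = b"
      using two by blast
    then have "{u \<in> {1..n}. ?par u = Some m} \<subseteq> {a, b}"
      unfolding interval_par_def by auto
    then have "card {u \<in> {1..n}. ?par u = Some m} \<le> card {a, b}"
      by (rule card_mono[rotated]) simp
    also have "\<dots> \<le> 2" by (simp add: card_insert_le_m1)
    finally show ?thesis .
  qed
next
  fix v assume "v \<notin> {1..n}"
  then show "interval_par n f v = None" unfolding interval_par_def by auto
next
  fix v p assume "interval_par n f v = Some p"
  then show "p \<in> {1..n}" using f[of v] unfolding interval_par_def by (auto split: if_splits)
next
  fix v assume "v \<in> {1..n}"
  then obtain k where "(pstep (interval_par n f) ^^ k) v = 1"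
    using interval_par_reaches_1[OF f] by blast
  moreover have "interval_par n f 1 = None" "1 \<in> {1..n}" using n by (auto simp: interval_par_def)
  ultimately show
    "\<exists>k \<rho>. \<rho> \<in> {1..n} \<and> interval_par n f \<rho> = None \<and> (pstep (interval_par n f) ^^ k) v = \<rho>"
    by blast
qed

lemma K4_covering_trees:
  assumes n: "1 \<le> n"
  shows "rooted_binary_tree {1..n} (interval_par n (\<lambda>k. k - 1))"
    and "rooted_binary_tree {1..n} (interval_par n (\<lambda>k. if k = 2 then 1 else k - 2))"
    and "rooted_binary_tree {1..n} (interval_par n (\<lambda>k. if k = 4 then 1 else k - 1))"
proof -
  show "rooted_binary_tree {1..n} (interval_par n (\<lambda>k. k - 1))"
  proof (rule rooted_binary_tree_interval)
    show "\<exists>a b. \<forall>k. 2 \<le> k \<longrightarrow> k \<le> n \<longrightarrow> k - 1 = m \<longrightarrow> k = a \<or> k = b" for m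
      by (intro exI[of _ "m + 1"]) auto
  qed (use n in auto)
  show "rooted_binary_tree {1..n} (interval_par n (\<lambda>k. if k = 2 then 1 else k - 2))"
  proof (rule rooted_binary_tree_interval)
    show "\<exists>a b. \<forall>k. 2 \<le> k \<longrightarrow> k \<le> n \<longrightarrow> (if k = 2 then 1 else k - 2) = m \<longrightarrow> k = a \<or> k = b"
      for m by (intro exI[of _ 2] exI[of _ "m + 2"]) auto
  qed (use n in auto)
  show "rooted_binary_tree {1..n} (interval_par n (\<lambda>k. if k = 4 then 1 else k - 1))"
  proof (rule rooted_binary_tree_interval)
    show "\<exists>a b. \<forall>k. 2 \<le> k \<longrightarrow> k \<le> n \<longrightarrow> (if k = 4 then 1 else k - 1) = m \<longrightarrow> k = a \<or> k = b"
      for m by (intro exI[of _ 4] exI[of _ "m + 1"]) auto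
  qed (use n in auto)
qed

lemma no_proper_3_colouring_of_K4:
  fixes a b c d :: nat
  assumes "a \<in> {1, 2, 3}" "b \<in> {1, 2, 3}" "c \<in> {1, 2, 3}" "d \<in> {1, 2, 3}"
    and "a \<noteq> b" "a \<noteq> c" "a \<noteq> d" "b \<noteq> c" "b \<noteq> d" "c \<noteq> d"
  shows False
  using assms by auto

lemma three_col_not_solvable_0:
  assumes c: "1 \<le> c" and n: "4 \<le> n"
  shows "\<not> solvable_in three_col c n 0"
proof
  assume "solvable_in three_col c n 0"
  then obtain L where L_local: "\<And>V par V' par' v. local_instance c n V par \<Longrightarrow>
      local_instance c n V' par' \<Longrightarrow> v \<in> V \<Longrightarrow> v \<in> V' \<Longrightarrow>
      view par 0 v = view par' 0 v \<Longrightarrow> L V par v = L V' par' v"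
    and L_col: "\<And>V par. local_instance c n V par \<Longrightarrow> three_col V par (L V par)"
    unfolding solvable_in_def by blast
  have "n \<le> n ^ c" using self_le_power[of n c] c n by simp
  then have inst: "local_instance c n {1..n} par" if "rooted_binary_tree {1..n} par" for par
    unfolding local_instance_def using that by auto
  \<comment> \<open>In zero rounds a colour depends on the identifier only, and the three trees
    contain all six edges between the nodes 1, 2, 3, 4.\<close>
  have "1 \<le> n" using n by simp
  note trees = K4_covering_trees[OF this]
  define g where "g = L {1..n} (interval_par n (\<lambda>k. k - 1))"
  have g_col: "g k \<in> {1, 2, 3}" if "k \<in> {1..n}" for k
    using L_col[OF inst[OF trees(1)]] that n unfolding g_def three_col_def by auto
  have edge: "g (f k) \<noteq> g k"
    if tree: "rooted_binary_tree {1..n} (interval_par n f)"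
      and k: "2 \<le> k" "k \<le> n" "1 \<le> f k" "f k \<le> n"
    for f k
  proof -
    have "L {1..n} (interval_par n f) x = g x" if "x \<in> {1..n}" for x
      unfolding g_def
      by (intro L_local[OF inst[OF tree] inst[OF trees(1)] that that])
        (simp only: view_0[OF tree] view_0[OF trees(1)])
    moreover have "L {1..n} (interval_par n f) (f k) \<noteq> L {1..n} (interval_par n f) k"
      using L_col[OF inst[OF tree]] k unfolding three_col_def interval_par_def by auto
    ultimately show ?thesis using k by simp
  qed
  have "g 1 \<noteq> g 2" "g 2 \<noteq> g 3" "g 3 \<noteq> g 4" "g 1 \<noteq> g 3" "g 2 \<noteq> g 4" "g 1 \<noteq> g 4"
    using edge[OF trees(1), of 2] edge[OF trees(1), of 3] edge[OF trees(1), of 4]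
      edge[OF trees(2), of 3] edge[OF trees(2), of 4] edge[OF trees(3), of 4] n
    by auto
  moreover have "g k \<in> {1, 2, 3}" if "k \<in> {1, 2, 3, 4}" for k
    using g_col[of k] that n by auto
  ultimately show False
    using no_proper_3_colouring_of_K4[of "g 1" "g 2" "g 3" "g 4"] by auto
qed

lemma round_complexity_solvable:
  "\<exists>T. solvable_in \<Pi> c n T \<Longrightarrow> solvable_in \<Pi> c n (round_complexity \<Pi> c n)"
  unfolding round_complexity_def by (rule LeastI_ex)

lemma round_complexity_le: "solvable_in \<Pi> c n T \<Longrightarrow> round_complexity \<Pi> c n \<le> T"
  unfolding round_complexity_def by (rule Least_le)

lemma bigtheta_of_le_Suc:
  fixes f g :: "nat \<Rightarrow> nat"
  assumes "\<And>n. g n \<le> f n" "\<And>n. f n \<le> Suc (g n)" "eventually (\<lambda>n. 1 \<le> g n) at_top"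
  shows "(\<lambda>n. real (f n)) \<in> \<Theta>(\<lambda>n. real (g n))"
proof (rule bigthetaI')
  show "eventually (\<lambda>n. 1 * norm (real (g n)) \<le> norm (real (f n)) \<and>
      norm (real (f n)) \<le> 2 * norm (real (g n))) at_top"
    using assms(3)
  proof eventually_elim
    case (elim n)
    then show ?case using assms(1,2)[of n] by simp
  qed
qed simp_all

lemma three_col_strict_same_complexity:
  assumes c: "1 \<le> c"
  shows "same_asymptotic_complexity three_col_strict three_col c"
proof -
  have strict_solvable: "\<exists>T. solvable_in three_col_strict c n T" for n
    using three_col_strict_solvable by blast
  have weaken: "solvable_in three_col c n T" if "solvable_in three_col_strict c n T" for n T
    using solvable_in_mono[OF three_col_strict_imp_three_col that] .
  have col_solvable: "\<exists>T. solvable_in three_col c n T" for n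
    using strict_solvable weaken by blast
  let ?f = "round_complexity three_col_strict c" and ?g = "round_complexity three_col c"
  have "?g n \<le> ?f n" for n
    by (rule round_complexity_le[OF weaken[OF round_complexity_solvable[OF strict_solvable]]])
  moreover have "?f n \<le> Suc (?g n)" for n
    by (rule round_complexity_le[OF three_col_strict_from_three_col[OF
          round_complexity_solvable[OF col_solvable]]])
  moreover have "eventually (\<lambda>n. 1 \<le> ?g n) at_top"
    unfolding eventually_at_top_linorder
  proof (intro exI allI impI)
    fix n :: nat assume "4 \<le> n"
    then show "1 \<le> ?g n"
      using round_complexity_solvable[OF col_solvable, of n] three_col_not_solvable_0[OF c]
      by (metis less_one not_less)
  qed
  ultimately show ?thesis
    unfolding same_asymptotic_complexity_def using strict_solvable col_solvable bigtheta_of_le_Suc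
    by blast
qed

theorem theorem7p3:
  shows "\<exists>(\<Gamma>' :: nat set) (\<Pi>' :: problem).
           is_LCL \<Gamma>' \<Pi>' \<and>
           (\<forall>c::nat. c \<ge> 1 \<longrightarrow> same_asymptotic_complexity \<Pi>' three_col c) \<and>
           (\<forall>V par lab. rooted_binary_tree V par \<longrightarrow> \<Pi>' V par lab \<longrightarrow> three_col V par lab) \<and>
           O1_mendable \<Gamma>' \<Pi>'"
  using three_col_strict_is_LCL three_col_strict_same_complexity three_col_strict_imp_three_col
    three_col_strict_O1_mendable
  by blast

end
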